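(* Let $\theta\in(0,\pi)$. For any $T_1,T_2>0$ with $T_1+T_2<2\theta$, there exists, up to isometry, a unique spherical bigon of angle $\theta$ with sides labeled $1,2$ such that side $i$ has total geodesic curvature $T_i$ for $i=1,2$.
   Context: A spherical bigon is the intersection $D_1\cap D_2$ of two open round disks in the unit sphere $\mathbb{S}^2$ of radii less than $\frac{\pi}{2}$, neither containing the other; side $i$ is its boundary arc on $\partial D_i$ and its angle is the interior angle at its corners. The total geodesic curvature of side $i$ is its length times its geodesic curvature $\cot r_i$, where $r_i$ is the radius of $D_i$. *)

theory Defs
  imports "HOL-Analysis.Analysis"
begin

definition S2 :: "(real^3) set" where
  "S2 = {x. norm x = 1}"

definition sdist :: "real^3 \<Rightarrow> real^3 \<Rightarrow> real" where
  "sdist x y = arccos (x \<bullet> y)"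

definition sdisk :: "real^3 \<Rightarrow> real \<Rightarrow> (real^3) set" where
  "sdisk c r = {x \<in> S2. sdist c x < r}"

definition is_bigon :: "real^3 \<Rightarrow> real \<Rightarrow> real^3 \<Rightarrow> real \<Rightarrow> bool" where
  "is_bigon c1 r1 c2 r2 \<longleftrightarrow>
     c1 \<in> S2 \<and> c2 \<in> S2 \<and> 0 < r1 \<and> r1 < pi/2 \<and> 0 < r2 \<and> r2 < pi/2 \<and>
     \<not> sdisk c1 r1 \<subseteq> sdisk c2 r2 \<and> \<not> sdisk c2 r2 \<subseteq> sdisk c1 r1 \<and>
     sdisk c1 r1 \<inter> sdisk c2 r2 \<noteq> {}"

definition bigon_side :: "real^3 \<Rightarrow> real \<Rightarrow> real^3 \<Rightarrow> real \<Rightarrow> (real^3) set" where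
  "bigon_side c r c' r' = {x \<in> S2. sdist c x = r \<and> sdist c' x \<le> r'}"

definition bigon_corners :: "real^3 \<Rightarrow> real \<Rightarrow> real^3 \<Rightarrow> real \<Rightarrow> (real^3) set" where
  "bigon_corners c1 r1 c2 r2 = {x \<in> S2. sdist c1 x = r1 \<and> sdist c2 x = r2}"

text \<open>Interior angle: at every corner p, the angle between the unit tangent vectors
  w1, w2 of side 1 and side 2 at p, pointing along the respective sides (w_i is tangent
  to S^2 at p, tangent to the circle \<partial>D_i, and points into the other disk D_j).\<close>
definition bigon_angle :: "real^3 \<Rightarrow> real \<Rightarrow> real^3 \<Rightarrow> real \<Rightarrow> real \<Rightarrow> bool" where
  "bigon_angle c1 r1 c2 r2 \<theta> \<longleftrightarrow>
     (\<forall>p \<in> bigon_corners c1 r1 c2 r2. \<forall>w1 w2.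
        norm w1 = 1 \<and> w1 \<bullet> p = 0 \<and> w1 \<bullet> c1 = 0 \<and> w1 \<bullet> c2 > 0 \<and>
        norm w2 = 1 \<and> w2 \<bullet> p = 0 \<and> w2 \<bullet> c2 = 0 \<and> w2 \<bullet> c1 > 0
        \<longrightarrow> arccos (w1 \<bullet> w2) = \<theta>)"

text \<open>Standard arclength parametrisation data of the circle of radius r about c:
  t \<mapsto> cos r c + sin r (cos t u + sin t v) has speed sin r.  The length of a subset A of
  this circle is sin r times the Lebesgue measure of the parameter set in [0,2pi).\<close>
definition circle_param :: "real^3 \<Rightarrow> real \<Rightarrow> real^3 \<Rightarrow> real^3 \<Rightarrow> real \<Rightarrow> real^3" where
  "circle_param c r u v t = cos r *\<^sub>R c + sin r *\<^sub>R (cos t *\<^sub>R u + sin t *\<^sub>R v)"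

definition circle_arc_length :: "real^3 \<Rightarrow> real \<Rightarrow> (real^3) set \<Rightarrow> real \<Rightarrow> bool" where
  "circle_arc_length c r A L \<longleftrightarrow>
     (\<forall>u v. norm u = 1 \<and> norm v = 1 \<and> u \<bullet> v = 0 \<and> u \<bullet> c = 0 \<and> v \<bullet> c = 0 \<longrightarrow>
        L = sin r * measure lborel {t \<in> {0..<2*pi}. circle_param c r u v t \<in> A})"

text \<open>Total geodesic curvature of the side on \<partial>D (disk (c,r); other disk (c',r')):
  length times the geodesic curvature cot r.\<close>
definition side_total_curvature :: "real^3 \<Rightarrow> real \<Rightarrow> real^3 \<Rightarrow> real \<Rightarrow> real \<Rightarrow> bool" where
  "side_total_curvature c r c' r' T \<longleftrightarrow>
     (\<exists>L. circle_arc_length c r (bigon_side c r c' r') L \<and> T = L * cot r)"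

end

theory Submission
  imports Defs
begin

text \<open>At a corner \<open>p\<close> the unit tangents of the sides are \<open>\<plusminus>(c\<^sub>i \<times> p) / sin r\<^sub>i\<close>, so the angle
  \<open>\<theta>\<close> fixes the distance \<open>d\<close> of the centres by the spherical law of cosines,
  \<open>cos d = cos r\<^sub>1 cos r\<^sub>2 - cos \<theta> sin r\<^sub>1 sin r\<^sub>2\<close>. Side \<open>i\<close> is an arc of angular width \<open>2 \<beta>\<^sub>i\<close>
  about \<open>c\<^sub>i\<close>, with \<open>cot \<beta>\<^sub>i\<close> given by the cotangent four-part formula, so its total curvature
  \<open>2 \<beta>\<^sub>i sin r\<^sub>i cot r\<^sub>i = F(r\<^sub>i, r\<^sub>j)\<close> depends only on the radii. Hence a bigon of angle \<open>\<theta>\<close> is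
  determined up to rotation by its radii, and the theorem amounts to unique solvability of
  \<open>F(r\<^sub>1, r\<^sub>2) = T\<^sub>1\<close>, \<open>F(r\<^sub>2, r\<^sub>1) = T\<^sub>2\<close> on \<open>(0, pi/2)\<^sup>2\<close>.

  Uniqueness: \<open>F\<close> is strictly decreasing in its first and strictly increasing in its second
  argument, and \<open>x \<mapsto> F(x, b) + F(b, x)\<close> is strictly decreasing; comparing two solutions with
  these three monotonicities leaves no room for a second one. Existence: along the curve on which
  side 1 keeps total curvature \<open>T\<^sub>1\<close>, the total curvature of side 2 falls continuously from
  \<open>2 \<theta> - T\<^sub>1 > T\<^sub>2\<close> to a non-positive value, and the intermediate value theorem applies.\<close>

unbundle cross3_syntax


definition arccot :: "real \<Rightarrow> real" where
  "arccot x = pi/2 - arctan x"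

lemma arccot_bounds: "0 < arccot x" "arccot x < pi"
  using arctan_bounded[of x] by (auto simp: arccot_def)

lemma sin_arccot: "sin (arccot x) = 1 / sqrt (1 + x\<^sup>2)"
  by (simp add: arccot_def sin_diff cos_arctan)

lemma cos_arccot: "cos (arccot x) = x / sqrt (1 + x\<^sup>2)"
  by (simp add: arccot_def cos_diff sin_arctan)

lemma cot_arccot: "cot (arccot x) = x"
proof -
  have "sqrt (1 + x\<^sup>2) > 0"
    by (simp add: add_pos_nonneg)
  then show ?thesis
    by (simp add: cot_def sin_arccot cos_arccot)
qed

lemma arccot_cot:
  assumes "0 < x" "x < pi"
  shows "arccot (cot x) = x"
proof -
  have "cot x = tan (pi/2 - x)"
    by (simp add: cot_def tan_def sin_diff cos_diff)
  then show ?thesis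
    using assms by (simp add: arccot_def arctan_tan)
qed

lemma arccot_less_iff: "arccot x < arccot y \<longleftrightarrow> y < x"
  by (simp add: arccot_def arctan_less_iff)

lemma arccot_le_iff: "arccot x \<le> arccot y \<longleftrightarrow> y \<le> x"
  by (simp add: arccot_def arctan_le_iff)

lemma continuous_on_arccot [continuous_intros]:
  "continuous_on S f \<Longrightarrow> continuous_on S (\<lambda>x. arccot (f x))"
  unfolding arccot_def by (intro continuous_intros)

lemma has_real_derivative_arccot:
  "(arccot has_real_derivative - inverse (1 + x\<^sup>2)) (at x)"
  unfolding arccot_def by (auto intro!: derivative_eq_intros)

lemma sin_less_self:
  fixes x :: real
  assumes "0 < x"
  shows "sin x < x"
proof (cases "x \<le> 1")
  case True
  have half: "0 < sin (x/2)" "sin (x/2) \<le> x/2"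
    using assms True pi_gt3 sin_x_le_x[of "x/2"] by (auto intro: sin_gt_zero)
  have "cos (x/2) \<noteq> 1"
  proof
    assume "cos (x/2) = 1"
    then have "sin (x/2) = 0"
      using sin_cos_squared_add[of "x/2"] by simp
    then show False
      using half(1) by simp
  qed
  then have "cos (x/2) < 1"
    using cos_le_one[of "x/2"] by linarith
  then have "sin x < 2 * sin (x/2)"
    using half(1) sin_double[of "x/2"] by simp
  then show ?thesis
    using half(2) by simp
next
  case False
  then show ?thesis
    using sin_le_one[of x] by linarith
qed

lemma inverse_sqrt_less_arccot: "1 / sqrt (1 + x\<^sup>2) < arccot x"
  using sin_less_self[OF arccot_bounds(1)[of x]] by (simp add: sin_arccot)

lemma frac_less_arccot: "x / (1 + x\<^sup>2) < arccot x"
proof -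
  have "x / (1 + x\<^sup>2) = sin (arccot x) * cos (arccot x)"
    by (simp add: sin_arccot cos_arccot add_pos_nonneg power2_eq_square[symmetric])
  also have "\<dots> = sin (2 * arccot x) / 2"
    by (simp add: sin_double)
  also have "\<dots> < arccot x"
    using sin_less_self[of "2 * arccot x"] arccot_bounds(1)[of x] by simp
  finally show ?thesis .
qed

section \<open>Total curvature of a side as a function of the radii\<close>

text \<open>For a bigon of angle \<open>\<theta>\<close> whose disks have radii \<open>a\<close> and \<open>b\<close>, the two centres and a
  corner form a spherical triangle with sides \<open>a\<close>, \<open>b\<close> and angle \<open>pi - \<theta>\<close> at the corner. The
  law of cosines gives the cosine \<open>centres_cos \<theta> a b\<close> of the distance of the centres; the
  cotangent four-part formula gives \<open>cot \<beta> = half_arc_cot \<theta> a b\<close> for the angle \<open>\<beta>\<close> at the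
  centre of radius \<open>a\<close>. That side is an arc of angular width \<open>2 * \<beta>\<close>, so its length is
  \<open>2 * \<beta> * sin a\<close> and its total geodesic curvature is \<open>side_curv \<theta> a b\<close>.\<close>

definition centres_cos :: "real \<Rightarrow> real \<Rightarrow> real \<Rightarrow> real" where
  "centres_cos \<theta> a b = cos a * cos b - cos \<theta> * sin a * sin b"

definition half_arc_cot :: "real \<Rightarrow> real \<Rightarrow> real \<Rightarrow> real" where
  "half_arc_cot \<theta> a b = (sin a * cot b + cos a * cos \<theta>) / sin \<theta>"

definition side_curv :: "real \<Rightarrow> real \<Rightarrow> real \<Rightarrow> real" where
  "side_curv \<theta> a b = 2 * cos a * arccot (half_arc_cot \<theta> a b)"

lemma centres_cos_commute: "centres_cos \<theta> a b = centres_cos \<theta> b a"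
  by (simp add: centres_cos_def algebra_simps)

lemma centres_cos_sum_squares:
  "(sin a * cos b + cos a * sin b * cos \<theta>)\<^sup>2 + (sin b * sin \<theta>)\<^sup>2 + (centres_cos \<theta> a b)\<^sup>2 = 1"
proof -
  have "sin a ^2 = 1 - cos a ^2" "sin b ^2 = 1 - cos b ^2" "sin \<theta> ^2 = 1 - cos \<theta> ^2"
    by (simp_all add: sin_squared_eq)
  then show ?thesis
    unfolding centres_cos_def power2_eq_square by algebra
qed

lemma cos_diff_centres_cos:
  "cos b - cos a * centres_cos \<theta> a b = sin a * (sin a * cos b + cos a * sin b * cos \<theta>)"
proof -
  have "cos a * cos a + sin a * sin a = 1"
    using sin_cos_squared_add3[of a] by simp
  then have "cos b = cos b * (cos a * cos a) + cos b * (sin a * sin a)"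
    by (metis distrib_left mult.right_neutral)
  then show ?thesis
    by (simp add: centres_cos_def algebra_simps)
qed

lemma centres_cos_bounds:
  assumes "0 < \<theta>" "\<theta> < pi" "0 < sin a" "0 < sin b"
  shows "cos (a + b) < centres_cos \<theta> a b" "centres_cos \<theta> a b < cos (a - b)"
proof -
  have "-1 < cos \<theta>" "cos \<theta> < 1"
    using assms cos_monotone_0_pi[of \<theta> pi] cos_monotone_0_pi[of 0 \<theta>] by auto
  moreover have "centres_cos \<theta> a b - cos (a + b) = sin a * sin b * (1 - cos \<theta>)"
    "cos (a - b) - centres_cos \<theta> a b = sin a * sin b * (1 + cos \<theta>)"
    by (simp_all add: centres_cos_def cos_add cos_diff algebra_simps)
  ultimately show "cos (a + b) < centres_cos \<theta> a b" "centres_cos \<theta> a b < cos (a - b)"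
    using assms(3,4) by (smt (verit) mult_pos_pos)+
qed

lemma half_arc_cot_eq:
  assumes "sin b \<noteq> 0" "sin \<theta> \<noteq> 0"
  shows "half_arc_cot \<theta> a b = (sin a * cos b + cos a * sin b * cos \<theta>) / (sin b * sin \<theta>)"
  using assms by (simp add: half_arc_cot_def cot_def field_simps)

lemma one_plus_half_arc_cot_sq:
  assumes "sin b \<noteq> 0" "sin \<theta> \<noteq> 0"
  shows "1 + (half_arc_cot \<theta> a b)\<^sup>2 = (1 - (centres_cos \<theta> a b)\<^sup>2) / (sin b * sin \<theta>)\<^sup>2"
  using assms centres_cos_sum_squares[of a b \<theta>]
  by (simp add: half_arc_cot_eq field_simps power2_eq_square)

lemma centres_cos_sq_le_one: "(centres_cos \<theta> a b)\<^sup>2 \<le> 1"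
  using centres_cos_sum_squares[of a b \<theta>]
    zero_le_power2[of "sin a * cos b + cos a * sin b * cos \<theta>"] zero_le_power2[of "sin b * sin \<theta>"]
  by linarith

lemma centres_cos_sq_less_one:
  assumes "sin b \<noteq> 0" "sin \<theta> \<noteq> 0"
  shows "(centres_cos \<theta> a b)\<^sup>2 < 1"
proof -
  have "0 < (sin b * sin \<theta>)\<^sup>2"
    using assms by simp
  then show ?thesis
    using centres_cos_sum_squares[of a b \<theta>]
      zero_le_power2[of "sin a * cos b + cos a * sin b * cos \<theta>"]
    by linarith
qed

section \<open>Uniqueness of the radii\<close>

lemma has_real_derivative_half_arc_cot_first:
  assumes "sin b \<noteq> 0" "sin \<theta> \<noteq> 0"
  shows "((\<lambda>x. half_arc_cot \<theta> x b) has_real_derivative centres_cos \<theta> x b / (sin b * sin \<theta>)) (at x)"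
proof -
  have "((\<lambda>x. half_arc_cot \<theta> x b) has_real_derivative (cos x * cot b - sin x * cos \<theta>) / sin \<theta>) (at x)"
    unfolding half_arc_cot_def using assms by (auto intro!: derivative_eq_intros simp: field_simps)
  moreover have "(cos x * cot b - sin x * cos \<theta>) / sin \<theta> = centres_cos \<theta> x b / (sin b * sin \<theta>)"
    using assms by (simp add: centres_cos_def cot_def field_simps)
  ultimately show ?thesis
    by simp
qed

lemma has_real_derivative_half_arc_cot_second:
  assumes "sin x \<noteq> 0" "sin \<theta> \<noteq> 0"
  shows "((\<lambda>x. half_arc_cot \<theta> b x) has_real_derivative - sin b / ((sin x)\<^sup>2 * sin \<theta>)) (at x)"
proof -
  have "(cot has_real_derivative - inverse ((sin x)\<^sup>2)) (at x)"
    using assms by simp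
  then show ?thesis
    unfolding half_arc_cot_def using assms by (auto intro!: derivative_eq_intros simp: field_simps)
qed


lemma has_real_derivative_side_curv_first:
  fixes x b :: real
  assumes "sin b \<noteq> 0" "sin \<theta> \<noteq> 0"
  defines "K \<equiv> centres_cos \<theta> x b"
  shows "((\<lambda>x. side_curv \<theta> x b) has_real_derivative
           - 2 * (sin x * arccot (half_arc_cot \<theta> x b) + cos x * K * (sin b * sin \<theta>) / (1 - K\<^sup>2))) (at x)"
proof -
  have "1 - K\<^sup>2 \<noteq> 0"
    using centres_cos_sq_less_one[OF assms(1,2), of x] unfolding K_def by linarith
  then have chain: "inverse (1 + (half_arc_cot \<theta> x b)\<^sup>2) * (K / (sin b * sin \<theta>))
      = K * (sin b * sin \<theta>) / (1 - K\<^sup>2)"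
    using assms(1,2) unfolding one_plus_half_arc_cot_sq[OF assms(1,2)] K_def[symmetric]
    by (simp add: field_simps power2_eq_square)
  have "((\<lambda>x. arccot (half_arc_cot \<theta> x b)) has_real_derivative - (K * (sin b * sin \<theta>) / (1 - K\<^sup>2))) (at x)"
    by (rule DERIV_cong[OF DERIV_chain2[OF has_real_derivative_arccot
          has_real_derivative_half_arc_cot_first[OF assms(1,2)]]]) (use chain in \<open>simp add: K_def\<close>)
  from DERIV_mult[OF DERIV_cmult[OF DERIV_cos] this] show ?thesis
    unfolding side_curv_def by (rule DERIV_cong) (simp add: algebra_simps)
qed

lemma has_real_derivative_side_curv_second:
  fixes x b :: real
  assumes "sin x \<noteq> 0" "sin \<theta> \<noteq> 0"
  defines "K \<equiv> centres_cos \<theta> x b"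
  shows "((\<lambda>x. side_curv \<theta> b x) has_real_derivative 2 * cos b * (sin b * sin \<theta>) / (1 - K\<^sup>2)) (at x)"
proof -
  have K: "K = centres_cos \<theta> b x"
    by (simp add: K_def centres_cos_commute)
  have "1 - K\<^sup>2 \<noteq> 0"
    using centres_cos_sq_less_one[OF assms(1,2), of b] unfolding K by linarith
  then have chain: "inverse (1 + (half_arc_cot \<theta> b x)\<^sup>2) * (- sin b / ((sin x)\<^sup>2 * sin \<theta>))
      = - (sin b * sin \<theta> / (1 - K\<^sup>2))"
    using assms(1,2) unfolding one_plus_half_arc_cot_sq[OF assms(1,2)] K[symmetric]
    by (simp add: field_simps power2_eq_square)
  have "((\<lambda>x. arccot (half_arc_cot \<theta> b x)) has_real_derivative sin b * sin \<theta> / (1 - K\<^sup>2)) (at x)"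
    by (rule DERIV_cong[OF DERIV_chain2[OF has_real_derivative_arccot
          has_real_derivative_half_arc_cot_second[OF assms(1,2)]]]) (use chain in simp)
  from DERIV_cmult[OF this, of "2 * cos b"] show ?thesis
    unfolding side_curv_def by (rule DERIV_cong) simp
qed

lemma side_curv_strict_mono_second:
  assumes "0 < \<theta>" "\<theta> < pi" "0 < a" "a < pi/2" "0 < b" "b < b'" "b' < pi/2"
  shows "side_curv \<theta> a b < side_curv \<theta> a b'"
proof -
  have "cot b' < cot b"
    using arccot_less_iff[of "cot b" "cot b'"] arccot_cot[of b] arccot_cot[of b'] assms by simp
  moreover have "0 < sin a" "0 < sin \<theta>"
    using assms by (auto intro: sin_gt_zero)
  ultimately have "half_arc_cot \<theta> a b' < half_arc_cot \<theta> a b"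
    by (simp add: half_arc_cot_def divide_strict_right_mono)
  moreover have "0 < cos a"
    using assms by (intro cos_gt_zero) auto
  ultimately show ?thesis
    by (simp add: side_curv_def arccot_less_iff)
qed

text \<open>If \<open>cos d = centres_cos \<theta> x b\<close> with \<open>0 \<le> d \<le> pi\<close>, the left-hand side is \<open>cos (d - x)\<close>.\<close>

lemma cos_centre_dist_sub_radius_nonneg:
  fixes \<theta> x b :: real
  assumes "0 < x" "x < pi/2" "0 < b" "b < pi/2"
  defines "K \<equiv> centres_cos \<theta> x b"
  shows "0 \<le> sin x * sqrt (1 - K\<^sup>2) + cos x * K"
proof -
  have sx: "0 < sin x" "sin x < 1" and cx: "0 < cos x" and sb: "0 < sin b" "sin b < 1" and cb: "0 < cos b"
    using assms sin_gt_zero[of x] sin_gt_zero[of b] cos_gt_zero[of x] cos_gt_zero[of b]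
      sin_monotone_2pi[of x "pi/2"] sin_monotone_2pi[of b "pi/2"]
    by auto
  have "cos \<theta> * sin x * sin b \<le> sin x * sin b"
    using sx sb cos_le_one[of \<theta>] by (simp add: mult_right_le_one_le)
  then have "cos x * cos b - sin x * sin b \<le> K"
    unfolding K_def centres_cos_def by linarith
  moreover have "0 < cos x * cos b" "sin x * sin b < sin x"
    using cx cb mult_strict_left_mono[OF sb(2) sx(1)] by simp_all
  ultimately have K_gt: "- sin x < K"
    by linarith
  have K1: "K\<^sup>2 \<le> 1"
    unfolding K_def by (rule centres_cos_sq_le_one)
  show ?thesis
  proof (cases "0 \<le> K")
    case False
    then have "K\<^sup>2 < (sin x)\<^sup>2"
      using power_strict_mono[of "-K" "sin x" 2] K_gt by simp
    then have "(cos x * K)\<^sup>2 \<le> (sin x * sqrt (1 - K\<^sup>2))\<^sup>2"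
      using K1 by (simp add: power_mult_distrib cos_squared_eq algebra_simps)
    then have "\<bar>cos x * K\<bar> \<le> sin x * sqrt (1 - K\<^sup>2)"
      using abs_le_square_iff[of "cos x * K" "sin x * sqrt (1 - K\<^sup>2)"] sx K1 by (simp add: abs_mult)
    then show ?thesis
      by linarith
  qed (use sx cx K1 in simp)
qed

lemma side_curv_strict_antimono_first:
  assumes "0 < \<theta>" "\<theta> < pi" "0 < b" "b < pi/2" "0 < a" "a < a'" "a' < pi/2"
  shows "side_curv \<theta> a' b < side_curv \<theta> a b"
proof (rule DERIV_neg_imp_decreasing[OF \<open>a < a'\<close>])
  fix x assume "a \<le> x" "x \<le> a'"
  then have x: "0 < x" "x < pi/2"
    using assms by auto
  define k where "k = half_arc_cot \<theta> x b"
  define K where "K = centres_cos \<theta> x b"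
  define Y where "Y = sin b * sin \<theta>"
  have sx: "0 < sin x" "0 < sin b" "0 < sin \<theta>"
    using assms x by (auto intro!: sin_gt_zero)
  then have Y: "0 < Y"
    by (simp add: Y_def)
  have L: "0 < 1 - K\<^sup>2"
    using centres_cos_sq_less_one[of b \<theta> x] sx by (simp add: K_def)
  have "1 + k\<^sup>2 = (1 - K\<^sup>2) / Y\<^sup>2"
    using one_plus_half_arc_cot_sq[of b \<theta> x] sx by (simp add: k_def K_def Y_def)
  then have "1 / sqrt (1 + k\<^sup>2) = Y / sqrt (1 - K\<^sup>2)"
    using Y L by (simp add: real_sqrt_divide)
  then have "sin x * Y / sqrt (1 - K\<^sup>2) < sin x * arccot k"
    using mult_strict_left_mono[OF inverse_sqrt_less_arccot[of k] sx(1)] by simp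
  moreover have "sin x * Y / sqrt (1 - K\<^sup>2) + cos x * K * Y / (1 - K\<^sup>2)
      = (sin x * sqrt (1 - K\<^sup>2) + cos x * K) * Y / (1 - K\<^sup>2)"
    using L by (simp add: field_simps real_sqrt_mult[symmetric])
  moreover have "0 \<le> (sin x * sqrt (1 - K\<^sup>2) + cos x * K) * Y / (1 - K\<^sup>2)"
    using cos_centre_dist_sub_radius_nonneg[OF x assms(3,4), of \<theta>] Y L by (simp add: K_def)
  ultimately have "0 < sin x * arccot k + cos x * K * Y / (1 - K\<^sup>2)"
    by linarith
  then have "- 2 * (sin x * arccot k + cos x * K * Y / (1 - K\<^sup>2)) < 0"
    by simp
  moreover have "((\<lambda>x. side_curv \<theta> x b) has_real_derivative
      - 2 * (sin x * arccot k + cos x * K * Y / (1 - K\<^sup>2))) (at x)"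
    unfolding k_def K_def Y_def using sx by (intro has_real_derivative_side_curv_first) auto
  ultimately show "\<exists>y. ((\<lambda>x. side_curv \<theta> x b) has_real_derivative y) (at x) \<and> y < 0"
    by blast
qed

lemma side_curv_sum_strict_antimono:
  assumes "0 < \<theta>" "\<theta> < pi" "0 < b" "b < pi/2" "0 < a" "a < a'" "a' < pi/2"
  shows "side_curv \<theta> a' b + side_curv \<theta> b a' < side_curv \<theta> a b + side_curv \<theta> b a"
proof (rule DERIV_neg_imp_decreasing[OF \<open>a < a'\<close>])
  fix x assume "a \<le> x" "x \<le> a'"
  then have x: "0 < x" "x < pi/2"
    using assms by auto
  define k where "k = half_arc_cot \<theta> x b"
  define K where "K = centres_cos \<theta> x b"
  define L where "L = 1 - K\<^sup>2"
  define X where "X = sin x * cos b + cos x * sin b * cos \<theta>"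
  define Y where "Y = sin b * sin \<theta>"
  have sx: "0 < sin x" "0 < sin b" "0 < sin \<theta>"
    using assms x by (auto intro!: sin_gt_zero)
  then have Y: "0 < Y"
    by (simp add: Y_def)
  have L: "0 < L"
    using centres_cos_sq_less_one[of b \<theta> x] sx by (simp add: L_def K_def)
  have "k = X / Y"
    using half_arc_cot_eq[of b \<theta> x] sx by (simp add: k_def X_def Y_def)
  moreover have "1 + k\<^sup>2 = L / Y\<^sup>2"
    using one_plus_half_arc_cot_sq[of b \<theta> x] sx by (simp add: k_def K_def L_def Y_def)
  ultimately have "k / (1 + k\<^sup>2) = (X / Y) / (L / Y\<^sup>2)"
    by simp
  also have "\<dots> = X * Y / L"
    using Y L by (simp add: field_simps power2_eq_square)
  finally have frac: "k / (1 + k\<^sup>2) = X * Y / L" .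
  have "cos b = cos x * K + sin x * X"
    using cos_diff_centres_cos[of b x \<theta>] by (simp add: K_def X_def)
  then have "- 2 * (sin x * arccot k + cos x * K * Y / L) + 2 * cos b * Y / L
      = 2 * sin x * (k / (1 + k\<^sup>2) - arccot k)"
    unfolding frac using L by (simp add: field_simps)
  also have "\<dots> < 0"
    using frac_less_arccot[of k] sx(1) by (simp add: mult_pos_neg)
  finally have "- 2 * (sin x * arccot k + cos x * K * Y / L) + 2 * cos b * Y / L < 0" .
  moreover have "((\<lambda>x. side_curv \<theta> x b + side_curv \<theta> b x) has_real_derivative
      - 2 * (sin x * arccot k + cos x * K * Y / L) + 2 * cos b * Y / L) (at x)"
    unfolding k_def K_def L_def Y_def using sx
    by (intro DERIV_add has_real_derivative_side_curv_first has_real_derivative_side_curv_second) auto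
  ultimately show "\<exists>y. ((\<lambda>x. side_curv \<theta> x b + side_curv \<theta> b x) has_real_derivative y) (at x) \<and> y < 0"
    by blast
qed

lemma side_curv_eqs_unique_le:
  assumes "0 < \<theta>" "\<theta> < pi"
    and r: "0 < s1" "s1 < pi/2" "0 < s2" "s2 < pi/2" "0 < t1" "t1 < pi/2" "0 < t2" "t2 < pi/2"
    and "s1 \<le> t1"
    and e1: "side_curv \<theta> s1 s2 = side_curv \<theta> t1 t2"
    and e2: "side_curv \<theta> s2 s1 = side_curv \<theta> t2 t1"
  shows "s1 = t1 \<and> s2 = t2"
proof -
  have first: "side_curv \<theta> a' b \<le> side_curv \<theta> a b"
    if "0 < a" "a \<le> a'" "a' < pi/2" "0 < b" "b < pi/2" for a a' b
    using side_curv_strict_antimono_first[of \<theta> b a a'] assms(1,2) that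
    by (cases "a = a'") auto
  have second: "side_curv \<theta> a b \<le> side_curv \<theta> a b'"
    if "0 < a" "a < pi/2" "0 < b" "b \<le> b'" "b' < pi/2" for a b b'
    using side_curv_strict_mono_second[of \<theta> a b b'] assms(1,2) that
    by (cases "b = b'") auto
  have sum: "side_curv \<theta> a' b + side_curv \<theta> b a' \<le> side_curv \<theta> a b + side_curv \<theta> b a"
    if "0 < a" "a \<le> a'" "a' < pi/2" "0 < b" "b < pi/2" for a a' b
    using side_curv_sum_strict_antimono[of \<theta> b a a'] assms(1,2) that
    by (cases "a = a'") auto
  show ?thesis
  proof (cases "t2 \<le> s2")
    case True
    have "side_curv \<theta> t1 t2 \<le> side_curv \<theta> t1 s2" "side_curv \<theta> t1 s2 \<le> side_curv \<theta> s1 s2"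
      using first[of s1 t1 s2] second[of t1 t2 s2] r True \<open>s1 \<le> t1\<close> by simp_all
    then have eqs: "side_curv \<theta> t1 t2 = side_curv \<theta> t1 s2" "side_curv \<theta> t1 s2 = side_curv \<theta> s1 s2"
      using e1 by linarith+
    have "\<not> s1 < t1"
      using side_curv_strict_antimono_first[of \<theta> s2 s1 t1] eqs(2) assms(1,2) r by linarith
    moreover have "\<not> t2 < s2"
      using side_curv_strict_mono_second[of \<theta> t1 t2 s2] eqs(1) assms(1,2) r by linarith
    ultimately show ?thesis
      using True \<open>s1 \<le> t1\<close> by simp
  next
    case False
    have "side_curv \<theta> t2 s1 + side_curv \<theta> s1 t2 < side_curv \<theta> s2 s1 + side_curv \<theta> s1 s2"
      using side_curv_sum_strict_antimono[of \<theta> s1 s2 t2] assms(1,2) r False by simp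
    moreover have "side_curv \<theta> t1 t2 + side_curv \<theta> t2 t1 \<le> side_curv \<theta> s1 t2 + side_curv \<theta> t2 s1"
      using sum[of s1 t1 t2] r \<open>s1 \<le> t1\<close> by auto
    ultimately show ?thesis
      using e1 e2 by simp
  qed
qed

lemma side_curv_eqs_unique:
  assumes "0 < \<theta>" "\<theta> < pi"
    and "0 < s1" "s1 < pi/2" "0 < s2" "s2 < pi/2" "0 < t1" "t1 < pi/2" "0 < t2" "t2 < pi/2"
    and "side_curv \<theta> s1 s2 = side_curv \<theta> t1 t2" "side_curv \<theta> s2 s1 = side_curv \<theta> t2 t1"
  shows "s1 = t1 \<and> s2 = t2"
proof (cases "s1 \<le> t1")
  case True
  show ?thesis
    by (rule side_curv_eqs_unique_le[OF assms(1-10) True assms(11,12)])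
next
  case False
  then have "t1 \<le> s1"
    by simp
  then show ?thesis
    using side_curv_eqs_unique_le[OF assms(1,2) assms(7-10) assms(3-6) _ assms(11,12)[symmetric]] by simp
qed

section \<open>Existence of the radii\<close>

lemma exists_cot_le_between:
  assumes "0 \<le> x" "x < pi"
  obtains B where "x < B" "B < pi" "cot B \<le> c"
proof
  define B where "B = arccot (min c (cot ((x + pi) / 2)))"
  have "arccot (cot ((x + pi) / 2)) = (x + pi) / 2"
    using assms by (intro arccot_cot) auto
  then have "(x + pi) / 2 \<le> B"
    unfolding B_def using arccot_le_iff[of "cot ((x + pi) / 2)" "min c (cot ((x + pi) / 2))"] by simp
  then show "x < B"
    using assms by simp
  show "B < pi" "cot B \<le> c"
    by (simp_all add: B_def arccot_bounds cot_arccot)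
qed

text \<open>With side 1 of radius \<open>r\<close>, parametrise the radius \<open>r2\<close> of side 2 by \<open>\<kappa> = sin r * cot r2\<close>:
  then \<open>partner_curv \<theta> \<kappa> r\<close> is the total curvature of side 2 (\<open>side_curv_partner\<close>), and unlike
  \<open>side_curv\<close> it stays continuous as \<open>\<kappa>\<close> decreases through \<open>0\<close>, i.e. as \<open>r2\<close> passes \<open>pi/2\<close>.\<close>

definition partner_curv :: "real \<Rightarrow> real \<Rightarrow> real \<Rightarrow> real" where
  "partner_curv \<theta> \<kappa> r = 2 * (\<kappa> / sqrt ((sin r)\<^sup>2 + \<kappa>\<^sup>2))
     * arccot ((cos r + \<kappa> * cos \<theta>) / (sqrt ((sin r)\<^sup>2 + \<kappa>\<^sup>2) * sin \<theta>))"

lemma side_curv_partner: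
  assumes "0 < sin \<theta>" "0 < r" "r < pi/2" "0 < \<kappa>"
  defines "r2 \<equiv> arccot (\<kappa> / sin r)"
  shows "0 < r2" "r2 < pi/2"
    and "half_arc_cot \<theta> r r2 = (\<kappa> + cos r * cos \<theta>) / sin \<theta>"
    and "side_curv \<theta> r2 r = partner_curv \<theta> \<kappa> r"
proof -
  have sr: "0 < sin r"
    using assms by (intro sin_gt_zero) auto
  show "0 < r2" "r2 < pi/2"
    using assms sr arctan_bounded[of "\<kappa> / sin r"] arctan_less_iff[of 0 "\<kappa> / sin r"]
    by (auto simp: r2_def arccot_def)
  have cot_r2: "cot r2 = \<kappa> / sin r"
    by (simp add: r2_def cot_arccot)
  then show "half_arc_cot \<theta> r r2 = (\<kappa> + cos r * cos \<theta>) / sin \<theta>"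
    using sr by (simp add: half_arc_cot_def)
  define D where "D = sqrt ((sin r)\<^sup>2 + \<kappa>\<^sup>2)"
  have D: "0 < D"
    using sr by (simp add: D_def add_pos_nonneg)
  have "sqrt (1 + (\<kappa> / sin r)\<^sup>2) = D / sin r"
    using sr by (simp add: D_def field_simps real_sqrt_divide)
  then have sin_r2: "sin r2 = sin r / D" and cos_r2: "cos r2 = \<kappa> / D"
    using sr D by (simp_all add: r2_def sin_arccot cos_arccot)
  have "half_arc_cot \<theta> r2 r = (sin r / D * (cos r / sin r) + \<kappa> / D * cos \<theta>) / sin \<theta>"
    by (simp add: half_arc_cot_def cot_def sin_r2 cos_r2)
  also have "\<dots> = (cos r + \<kappa> * cos \<theta>) / (D * sin \<theta>)"
    using sr D by (simp add: field_simps)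
  finally show "side_curv \<theta> r2 r = partner_curv \<theta> \<kappa> r"
    by (simp add: side_curv_def partner_curv_def cos_r2 D_def)
qed

lemma partner_curv_nonpos:
  assumes "\<kappa> \<le> 0"
  shows "partner_curv \<theta> \<kappa> r \<le> 0"
proof -
  let ?c = "arccot ((cos r + \<kappa> * cos \<theta>) / (sqrt ((sin r)\<^sup>2 + \<kappa>\<^sup>2) * sin \<theta>))"
  have "2 * \<kappa> * ?c \<le> 0"
    using mult_nonpos_nonneg[OF assms less_imp_le[OF arccot_bounds(1)]] by simp
  then show ?thesis
    unfolding partner_curv_def by (simp add: divide_nonpos_nonneg)
qed

lemma partner_curv_at_zero:
  assumes "0 < x" "x < \<theta>" "\<theta> < pi"
  shows "0 < sin \<theta> * cot x - cos \<theta>" "partner_curv \<theta> (sin \<theta> * cot x - cos \<theta>) 0 = 2 * (\<theta> - x)"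
proof -
  have s: "0 < sin x" "0 < sin \<theta>" "0 < sin (\<theta> - x)"
    using assms by (auto intro!: sin_gt_zero)
  have \<kappa>: "sin \<theta> * cot x - cos \<theta> = sin (\<theta> - x) / sin x"
    using s by (simp add: cot_def sin_diff field_simps)
  then show "0 < sin \<theta> * cot x - cos \<theta>"
    using s by simp
  have "(1 + sin (\<theta> - x) / sin x * cos \<theta>) / (sin (\<theta> - x) / sin x * sin \<theta>) = cot (\<theta> - x)"
    using sin_diff[of \<theta> "\<theta> - x"] s by (simp add: cot_def field_simps)
  then show "partner_curv \<theta> (sin \<theta> * cot x - cos \<theta>) 0 = 2 * (\<theta> - x)"
    using s arccot_cot[of "\<theta> - x"] assms by (simp add: \<kappa> partner_curv_def)
qed

lemma div_cos_between:
  assumes "0 < x" "x < B" "0 \<le> r" "r \<le> arccos (x / B)"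
  shows "0 < cos r" "x \<le> x / cos r" "x / cos r \<le> B"
proof -
  have xB: "0 < x / B" "x / B < 1"
    using assms by auto
  have "cos (arccos (x / B)) \<le> cos r"
    using assms arccos_le_pi2[of "x / B"] by (intro cos_monotone_0_pi_le) auto
  then have c: "x / B \<le> cos r"
    using xB by simp
  then show cp: "0 < cos r"
    using xB by linarith
  show "x \<le> x / cos r"
    using cp assms cos_le_one[of r] by (simp add: le_divide_eq)
  have "x \<le> cos r * B"
    using c assms by (simp add: divide_le_eq)
  then show "x / cos r \<le> B"
    using cp by (simp add: divide_le_eq mult.commute)
qed

lemma continuous_on_partner_curv:
  assumes "continuous_on S k" "0 < sin \<theta>" "\<And>r. r \<in> S \<Longrightarrow> 0 < (sin r)\<^sup>2 + (k r)\<^sup>2"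
  shows "continuous_on S (\<lambda>r. partner_curv \<theta> (k r) r)"
proof -
  have "sqrt ((sin r)\<^sup>2 + (k r)\<^sup>2) \<noteq> 0" if "r \<in> S" for r
    using real_sqrt_gt_zero[OF assms(3)[OF that]] by linarith
  then show ?thesis
    unfolding partner_curv_def using assms(1,2) by (intro continuous_intros) auto
qed

lemma continuous_on_partner_curv_along:
  fixes \<theta> x B :: real
  assumes "0 < x" "x < \<theta>" "\<theta> < pi" "x < B" "B < pi"
  defines "\<kappa> \<equiv> \<lambda>r. sin \<theta> * cot (x / cos r) - cos r * cos \<theta>"
  shows "continuous_on {0..arccos (x / B)} (\<lambda>r. partner_curv \<theta> (\<kappa> r) r)"
proof -
  have s\<theta>: "0 < sin \<theta>"
    using assms by (intro sin_gt_zero) auto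
  have between: "0 < cos r" "x \<le> x / cos r" "x / cos r \<le> B" if "r \<in> {0..arccos (x / B)}" for r
    using div_cos_between[of x B r] that assms by auto
  have "continuous_on {0..arccos (x / B)} (\<lambda>r. x / cos r)"
    using between(1) by (intro continuous_intros) force
  moreover have "sin (x / cos r) \<noteq> 0" if "r \<in> {0..arccos (x / B)}" for r
    using between[OF that] assms sin_gt_zero[of "x / cos r"] by auto
  ultimately have "continuous_on {0..arccos (x / B)} \<kappa>"
    unfolding \<kappa>_def cot_def using between(1) by (intro continuous_intros) force+
  moreover have "0 < (sin r)\<^sup>2 + (\<kappa> r)\<^sup>2" if "r \<in> {0..arccos (x / B)}" for r
  proof (cases "r = 0")
    case True
    then show ?thesis
      using partner_curv_at_zero(1)[of x \<theta>] assms by (simp add: \<kappa>_def add_nonneg_pos)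
  next
    case False
    then have "0 < sin r"
      using that arccos_le_pi2[of "x / B"] assms by (intro sin_gt_zero) auto
    then show ?thesis
      by (simp add: add_pos_nonneg)
  qed
  ultimately show ?thesis
    using continuous_on_partner_curv s\<theta> by blast
qed

text \<open>Side 1 of radius \<open>r\<close> has total curvature \<open>2 * x\<close> exactly when its half-arc is \<open>x / cos r\<close>,
  which determines \<open>\<kappa>\<close>. Along this curve the total curvature of side 2 falls from \<open>2 * (\<theta> - x)\<close>
  at \<open>r = 0\<close> to a non-positive value once the half-arc is close enough to \<open>pi\<close>.\<close>

lemma partner_curv_attains:
  fixes \<theta> x T :: real
  assumes "0 < \<theta>" "\<theta> < pi" "0 < x" "x < \<theta>" "0 < T" "T < 2 * (\<theta> - x)"
  defines "\<kappa> \<equiv> \<lambda>r. sin \<theta> * cot (x / cos r) - cos r * cos \<theta>"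
  obtains r where "0 < r" "r < pi/2" "0 < cos r" "0 < x / cos r" "x / cos r < pi"
    "0 < \<kappa> r" "partner_curv \<theta> (\<kappa> r) r = T"
proof -
  have s\<theta>: "0 < sin \<theta>"
    using assms by (intro sin_gt_zero) auto
  obtain B where B: "x < B" "B < pi" "cot B \<le> - 2 / sin \<theta>"
    using exists_cot_le_between[of x] assms by auto
  define rh where "rh = arccos (x / B)"
  have "0 < x / B" "x / B < 1"
    using assms B by auto
  then have rh: "0 < rh" "rh < pi/2" "cos rh = x / B"
    using arccos_lt_bounded[of "x / B"] arccos_less_arccos[of 0 "x / B"] by (auto simp: rh_def)
  have cont: "continuous_on {0..rh} (\<lambda>r. partner_curv \<theta> (\<kappa> r) r)"
    unfolding rh_def \<kappa>_def using assms B by (intro continuous_on_partner_curv_along) auto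
  have "partner_curv \<theta> (\<kappa> 0) 0 = 2 * (\<theta> - x)"
    unfolding \<kappa>_def using partner_curv_at_zero(2)[of x \<theta>] assms by simp
  moreover have "\<kappa> rh \<le> 0"
  proof -
    have "x / cos rh = B"
      using rh(3) assms B by simp
    then have "sin \<theta> * cot (x / cos rh) \<le> -2"
      using B(3) s\<theta> by (simp add: field_simps)
    moreover have "\<bar>cos rh * cos \<theta>\<bar> \<le> 1"
      by (simp add: abs_mult mult_le_one)
    ultimately show ?thesis
      unfolding \<kappa>_def by linarith
  qed
  ultimately obtain r where r: "0 \<le> r" "r \<le> rh" "partner_curv \<theta> (\<kappa> r) r = T"
    using IVT2'[of "\<lambda>r. partner_curv \<theta> (\<kappa> r) r" rh T 0] partner_curv_nonpos[of "\<kappa> rh" \<theta> rh]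
      cont assms(5,6) rh by force
  have "0 < \<kappa> r"
    using partner_curv_nonpos[of "\<kappa> r" \<theta> r] r(3) assms(5) by force
  moreover have "r \<noteq> 0"
    using r(3) \<open>partner_curv \<theta> (\<kappa> 0) 0 = 2 * (\<theta> - x)\<close> assms(6) by auto
  moreover have "0 < cos r" "x \<le> x / cos r" "x / cos r \<le> B"
    using div_cos_between[of x B r] r assms B by (auto simp: rh_def)
  ultimately show ?thesis
    using that[of r] r rh assms B by auto
qed

lemma side_curv_eqs_solvable:
  assumes "0 < \<theta>" "\<theta> < pi" "0 < T1" "0 < T2" "T1 + T2 < 2 * \<theta>"
  obtains r1 r2 where "0 < r1" "r1 < pi/2" "0 < r2" "r2 < pi/2"
    "side_curv \<theta> r1 r2 = T1" "side_curv \<theta> r2 r1 = T2"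
proof -
  define \<kappa> where "\<kappa> = (\<lambda>r. sin \<theta> * cot (T1 / 2 / cos r) - cos r * cos \<theta>)"
  obtain r where r: "0 < r" "r < pi/2" "0 < cos r" "0 < T1 / 2 / cos r" "T1 / 2 / cos r < pi"
      "0 < \<kappa> r" "partner_curv \<theta> (\<kappa> r) r = T2"
    using partner_curv_attains[of \<theta> "T1 / 2" T2] assms unfolding \<kappa>_def by auto
  have s\<theta>: "0 < sin \<theta>"
    using assms by (intro sin_gt_zero) auto
  define r2 where "r2 = arccot (\<kappa> r / sin r)"
  note partner = side_curv_partner[OF s\<theta> r(1,2,6), folded r2_def]
  have "half_arc_cot \<theta> r r2 = cot (T1 / 2 / cos r)"
    using partner(3) s\<theta> by (simp add: \<kappa>_def)
  then have "side_curv \<theta> r r2 = T1"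
    using arccot_cot[OF r(4,5)] r(3) by (simp add: side_curv_def)
  then show ?thesis
    using that r(1,2,7) partner(1,2,4) by blast
qed

section \<open>Spherical geometry of two disks\<close>

lemma S2_inner_self: "x \<in> S2 \<Longrightarrow> x \<bullet> x = 1"
  by (simp add: S2_def dot_square_norm)

lemma S2_inner_bounds:
  assumes "x \<in> S2" "y \<in> S2"
  shows "-1 \<le> x \<bullet> y" "x \<bullet> y \<le> 1"
proof -
  have "\<bar>x \<bullet> y\<bar> \<le> 1"
    using Cauchy_Schwarz_ineq2[of x y] assms by (simp add: S2_def)
  then show "-1 \<le> x \<bullet> y" "x \<bullet> y \<le> 1"
    by auto
qed

lemma cos_sdist: "x \<in> S2 \<Longrightarrow> y \<in> S2 \<Longrightarrow> cos (sdist x y) = x \<bullet> y"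
  using S2_inner_bounds[of x y] by (simp add: sdist_def)

lemma sdist_commute: "sdist x y = sdist y x"
  by (simp add: sdist_def inner_commute)

lemma sdist_eq_iff:
  assumes "x \<in> S2" "y \<in> S2" "0 \<le> r" "r \<le> pi"
  shows "sdist x y = r \<longleftrightarrow> x \<bullet> y = cos r"
  using assms cos_sdist[of x y] by (auto simp: sdist_def arccos_cos)

lemma sdist_le_iff:
  assumes "x \<in> S2" "y \<in> S2" "0 \<le> r" "r \<le> pi"
  shows "sdist x y \<le> r \<longleftrightarrow> cos r \<le> x \<bullet> y"
proof
  assume "sdist x y \<le> r"
  then have "cos r \<le> cos (sdist x y)"
    using assms arccos_bounded[of "x \<bullet> y"] S2_inner_bounds[of x y]
    by (intro cos_monotone_0_pi_le) (auto simp: sdist_def)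
  then show "cos r \<le> x \<bullet> y"
    using assms by (simp add: cos_sdist)
next
  assume "cos r \<le> x \<bullet> y"
  then have "arccos (x \<bullet> y) \<le> arccos (cos r)"
    using assms S2_inner_bounds[of x y] by (intro arccos_le_arccos) auto
  then show "sdist x y \<le> r"
    using assms by (simp add: sdist_def arccos_cos)
qed

lemma cos_sdist_add_le_inner:
  fixes x y z :: "real^3"
  assumes S: "x \<in> S2" "y \<in> S2" "z \<in> S2"
  shows "cos (sdist x y + sdist y z) \<le> x \<bullet> z"
proof -
  define x' where "x' = x - (x \<bullet> y) *\<^sub>R y"
  define z' where "z' = z - (z \<bullet> y) *\<^sub>R y"
  have one: "y \<bullet> y = 1" "x \<bullet> x = 1" "z \<bullet> z = 1"
    using S S2_inner_self by auto
  have "x' \<bullet> z' = x \<bullet> z - (x \<bullet> y) * (y \<bullet> z)"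
    unfolding x'_def z'_def using one
    by (simp add: inner_diff_left inner_diff_right inner_commute algebra_simps)
  moreover have "norm x' = sin (sdist x y)" "norm z' = sin (sdist y z)"
    unfolding x'_def z'_def using one S2_inner_bounds[OF S(1,2)] S2_inner_bounds[OF S(2,3)]
    by (simp_all add: norm_eq_sqrt_inner sdist_def sin_arccos inner_diff_left inner_diff_right
        inner_commute algebra_simps power2_eq_square)
  moreover have "\<bar>x' \<bullet> z'\<bar> \<le> norm x' * norm z'"
    by (rule Cauchy_Schwarz_ineq2)
  ultimately show ?thesis
    using S by (simp add: cos_add cos_sdist inner_commute)
qed

lemma sdist_triangle:
  fixes x y z :: "real^3"
  assumes S: "x \<in> S2" "y \<in> S2" "z \<in> S2"
  shows "sdist x z \<le> sdist x y + sdist y z"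
proof (cases "sdist x y + sdist y z \<le> pi")
  case True
  moreover have "0 \<le> sdist x y + sdist y z"
    using arccos_bounded S2_inner_bounds[OF S(1,2)] S2_inner_bounds[OF S(2,3)] by (simp add: sdist_def)
  ultimately show ?thesis
    using sdist_le_iff[OF S(1,3)] cos_sdist_add_le_inner[OF S] by simp
next
  case False
  moreover have "sdist x z \<le> pi"
    using arccos_bounded[OF S2_inner_bounds[OF S(1,3)]] by (simp add: sdist_def)
  ultimately show ?thesis
    by linarith
qed

lemma cross_inner_sq:
  fixes x y z :: "real^3"
  shows "((x \<times> y) \<bullet> z)\<^sup>2 = (x\<bullet>x)*(y\<bullet>y)*(z\<bullet>z) + 2*(x\<bullet>y)*(y\<bullet>z)*(z\<bullet>x)
           - (x\<bullet>x)*(y\<bullet>z)\<^sup>2 - (y\<bullet>y)*(z\<bullet>x)\<^sup>2 - (z\<bullet>z)*(x\<bullet>y)\<^sup>2"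
  by (simp add: cross3_def inner_vec_def sum_3 power2_eq_square algebra_simps)

lemma cross_inner_swap:
  fixes c1 c2 p :: "real^3"
  shows "(c2 \<times> p) \<bullet> c1 = - ((c1 \<times> p) \<bullet> c2)"
  by (simp add: cross3_def inner_vec_def sum_3 algebra_simps)

lemma cross_inner_cross_S2:
  fixes c p :: "real^3"
  assumes "c \<in> S2" "p \<in> S2"
  shows "(c \<times> p) \<bullet> (c \<times> p) = 1 - (c \<bullet> p)\<^sup>2"
  using norm_cross[of c p] assms by (simp add: S2_def power2_norm_eq_inner[symmetric])

lemma orthogonal_both_eq_cross_multiple:
  fixes x y w :: "real^3"
  assumes "x \<times> y \<noteq> 0" "w \<bullet> x = 0" "w \<bullet> y = 0"
  shows "w = ((w \<bullet> (x \<times> y)) / ((x \<times> y) \<bullet> (x \<times> y))) *\<^sub>R (x \<times> y)"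
proof -
  define a where "a = x \<times> y"
  have a0: "a \<bullet> a > 0"
    using assms(1) by (simp add: a_def)
  have "a \<times> w = 0"
  proof -
    have "a \<times> w = - (w \<times> a)"
      by (rule cross_skew)
    also have "w \<times> a = (w \<bullet> y) *\<^sub>R x - (w \<bullet> x) *\<^sub>R y"
      unfolding a_def by (rule Lagrange)
    finally show ?thesis
      using assms by simp
  qed
  then have e: "(a \<bullet> w)\<^sup>2 = (a \<bullet> a) * (w \<bullet> w)"
    using norm_cross_dot[of a w] by (simp add: power2_norm_eq_inner power_mult_distrib)
  define l where "l = (w \<bullet> a) / (a \<bullet> a)"
  have "(w - l *\<^sub>R a) \<bullet> (w - l *\<^sub>R a) = w \<bullet> w - 2 * l * (w \<bullet> a) + l\<^sup>2 * (a \<bullet> a)"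
    by (simp add: inner_diff_left inner_diff_right inner_commute power2_eq_square algebra_simps)
  also have "\<dots> = 0"
    using a0 e
    by (simp add: l_def field_simps power2_eq_square inner_commute)
  finally have "w - l *\<^sub>R a = 0"
    by simp
  then show ?thesis
    by (simp add: l_def a_def)
qed

lemma S2_adapted_frame:
  fixes c1 c2 :: "real^3"
  assumes S: "c1 \<in> S2" "c2 \<in> S2" and k: "\<bar>c1 \<bullet> c2\<bar> < 1"
  obtains u n where "norm u = 1" "norm n = 1" "u \<bullet> c1 = 0" "n \<bullet> c1 = 0" "u \<bullet> n = 0"
    "c2 = (c1 \<bullet> c2) *\<^sub>R c1 + sqrt (1 - (c1 \<bullet> c2)\<^sup>2) *\<^sub>R u"
proof
  define k where "k = c1 \<bullet> c2"
  define s where "s = sqrt (1 - k\<^sup>2)"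
  have "0 < 1 - k\<^sup>2"
    using k by (simp add: k_def abs_square_less_1)
  then have s: "0 < s" "s * s = 1 - k\<^sup>2"
    by (simp_all add: s_def)
  have cc: "c1 \<bullet> c1 = 1" "c2 \<bullet> c2 = 1"
    using S S2_inner_self by auto
  define u where "u = (1 / s) *\<^sub>R (c2 - k *\<^sub>R c1)"
  have "(c2 - k *\<^sub>R c1) \<bullet> c1 = 0"
    using cc by (simp add: inner_diff_left k_def inner_commute[of c2 c1])
  then show uc: "u \<bullet> c1 = 0"
    by (simp add: u_def)
  have "u \<bullet> u = 1"
    using cc s by (simp add: u_def inner_diff_left inner_diff_right k_def inner_commute
        power2_eq_square field_simps)
  then show nu: "norm u = 1"
    by (simp add: norm_eq_sqrt_inner)
  have "(c1 \<times> u) \<bullet> (c1 \<times> u) = 1"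
    using norm_cross[of c1 u] nu S uc
    by (simp add: S2_def power2_norm_eq_inner[symmetric] inner_commute)
  then show "norm (c1 \<times> u) = 1"
    by (simp add: norm_eq_sqrt_inner)
  show "(c1 \<times> u) \<bullet> c1 = 0" "u \<bullet> (c1 \<times> u) = 0"
    using dot_cross_self by (auto simp: inner_commute)
  show "c2 = (c1 \<bullet> c2) *\<^sub>R c1 + sqrt (1 - (c1 \<bullet> c2)\<^sup>2) *\<^sub>R u"
    using s by (simp add: u_def k_def[symmetric] s_def[symmetric])
qed

lemma arccos_cos_abs: "\<bar>x\<bar> \<le> pi \<Longrightarrow> arccos (cos x) = \<bar>x\<bar>"
  by (metis abs_ge_zero abs_of_nonneg abs_of_nonpos arccos_cos cos_minus nle_le)

lemma great_circle_through:
  fixes c1 c2 :: "real^3"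
  assumes S: "c1 \<in> S2" "c2 \<in> S2" and k: "\<bar>c1 \<bullet> c2\<bar> < 1"
  obtains \<gamma> where "\<And>t. \<gamma> t \<in> S2" "\<And>t. c1 \<bullet> \<gamma> t = cos t" "\<And>t. c2 \<bullet> \<gamma> t = cos (t - sdist c1 c2)"
proof -
  obtain u n where u: "norm u = 1" "u \<bullet> c1 = 0"
    and c2: "c2 = (c1 \<bullet> c2) *\<^sub>R c1 + sqrt (1 - (c1 \<bullet> c2)\<^sup>2) *\<^sub>R u"
    using S2_adapted_frame[OF S k] by metis
  define \<gamma> where "\<gamma> t = cos t *\<^sub>R c1 + sin t *\<^sub>R u" for t
  have cc: "c1 \<bullet> c1 = 1" "u \<bullet> u = 1" "c1 \<bullet> u = 0"
    using S2_inner_self[OF S(1)] u by (simp_all add: dot_square_norm inner_commute)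
  have "\<gamma> t \<bullet> \<gamma> t = 1" for t
    using cc by (simp add: \<gamma>_def inner_add_left inner_add_right inner_commute power2_eq_square[symmetric])
  then have "\<gamma> t \<in> S2" for t
    by (simp add: S2_def norm_eq_sqrt_inner)
  moreover have "c1 \<bullet> \<gamma> t = cos t" for t
    using cc by (simp add: \<gamma>_def inner_add_right)
  moreover have "c2 \<bullet> \<gamma> t = cos (t - sdist c1 c2)" for t
  proof -
    have "sin (sdist c1 c2) = sqrt (1 - (c1 \<bullet> c2)\<^sup>2)"
      using S2_inner_bounds[OF S] by (simp add: sdist_def sin_arccos)
    moreover have "c2 \<bullet> \<gamma> t = (c1 \<bullet> c2) * cos t + sqrt (1 - (c1 \<bullet> c2)\<^sup>2) * sin t"
      using cc by (subst c2) (simp add: \<gamma>_def inner_add_left inner_add_right inner_commute)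
    ultimately show ?thesis
      using S by (simp add: cos_diff cos_sdist)
  qed
  ultimately show ?thesis
    using that by blast
qed

lemma exists_S2_inner_pair:
  fixes c1 c2 :: "real^3"
  assumes S: "c1 \<in> S2" "c2 \<in> S2" and k: "\<bar>c1 \<bullet> c2\<bar> < 1"
    and gram: "0 < 1 - (c1 \<bullet> c2)\<^sup>2 - C1\<^sup>2 - C2\<^sup>2 + 2 * (c1 \<bullet> c2) * C1 * C2"
  obtains p where "p \<in> S2" "c1 \<bullet> p = C1" "c2 \<bullet> p = C2"
proof -
  obtain u n where u: "norm u = 1" "norm n = 1" "u \<bullet> c1 = 0" "n \<bullet> c1 = 0" "u \<bullet> n = 0"
    and c2: "c2 = (c1 \<bullet> c2) *\<^sub>R c1 + sqrt (1 - (c1 \<bullet> c2)\<^sup>2) *\<^sub>R u"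
    using S2_adapted_frame[OF S k] by metis
  define k where "k = c1 \<bullet> c2"
  define s where "s = sqrt (1 - k\<^sup>2)"
  have "0 < 1 - k\<^sup>2"
    using k by (simp add: k_def abs_square_less_1)
  then have s: "0 < s" "s * s = 1 - k\<^sup>2"
    by (simp_all add: s_def)
  define b where "b = (C2 - k * C1) / s"
  have "s * b = C2 - k * C1"
    using s by (simp add: b_def)
  have "s\<^sup>2 * (1 - C1\<^sup>2 - b\<^sup>2) = (s * s) * (1 - C1\<^sup>2) - (s * b)\<^sup>2"
    by (simp add: algebra_simps power2_eq_square)
  also have "\<dots> = (s * s) * (1 - C1\<^sup>2) - (C2 - k * C1)\<^sup>2"
    unfolding \<open>s * b = C2 - k * C1\<close> ..
  also have "\<dots> = 1 - k\<^sup>2 - C1\<^sup>2 - C2\<^sup>2 + 2 * k * C1 * C2"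
    unfolding s(2) by (simp add: algebra_simps power2_eq_square)
  finally have "s\<^sup>2 * (1 - C1\<^sup>2 - b\<^sup>2) = 1 - k\<^sup>2 - C1\<^sup>2 - C2\<^sup>2 + 2 * k * C1 * C2" .
  then have "0 < s\<^sup>2 * (1 - C1\<^sup>2 - b\<^sup>2)"
    using gram by (simp add: k_def)
  then have g: "0 < 1 - C1\<^sup>2 - b\<^sup>2"
    using s(1) by (simp add: zero_less_mult_iff)
  define p where "p = C1 *\<^sub>R c1 + b *\<^sub>R u + sqrt (1 - C1\<^sup>2 - b\<^sup>2) *\<^sub>R n"
  have cc: "c1 \<bullet> c1 = 1" "u \<bullet> u = 1" "n \<bullet> n = 1"
    using S2_inner_self[OF S(1)] u by (simp_all add: dot_square_norm)
  have "p \<bullet> p = C1\<^sup>2 + b\<^sup>2 + (1 - C1\<^sup>2 - b\<^sup>2)"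
    using cc u g by (simp add: p_def inner_add_left inner_add_right inner_commute power2_eq_square)
  then have "p \<in> S2"
    by (simp add: S2_def norm_eq_sqrt_inner)
  moreover have "c1 \<bullet> p = C1"
    using cc u by (simp add: p_def inner_add_right inner_commute)
  moreover have "c2 \<bullet> p = k * C1 + s * b"
    using cc u by (subst c2) (simp add: p_def k_def s_def inner_add_left inner_add_right inner_commute)
  then have "c2 \<bullet> p = C2"
    using s by (simp add: b_def)
  ultimately show ?thesis
    using that by blast
qed

lemma bigon_centre_dist:
  assumes "is_bigon c1 r1 c2 r2"
  shows "\<bar>r1 - r2\<bar> < sdist c1 c2" "sdist c1 c2 < r1 + r2"
proof -
  have S: "c1 \<in> S2" "c2 \<in> S2"
    using assms by (auto simp: is_bigon_def)
  obtain x where x: "x \<in> S2" "sdist c1 x < r1" "sdist c2 x < r2"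
    using assms by (auto simp: is_bigon_def sdisk_def)
  have "sdist c1 c2 \<le> sdist c1 x + sdist x c2"
    using sdist_triangle S x by blast
  then show "sdist c1 c2 < r1 + r2"
    using x by (simp add: sdist_commute)
  have "r2 < sdist c1 c2 + r1"
  proof (rule ccontr)
    assume "\<not> r2 < sdist c1 c2 + r1"
    then have "sdisk c1 r1 \<subseteq> sdisk c2 r2"
    proof (auto simp: sdisk_def)
      fix y assume y: "y \<in> S2" "sdist c1 y < r1" "\<not> r2 < sdist c1 c2 + r1"
      have "sdist c2 y \<le> sdist c2 c1 + sdist c1 y"
        using sdist_triangle S y by blast
      then show "sdist c2 y < r2"
        using y by (simp add: sdist_commute)
    qed
    then show False using assms by (simp add: is_bigon_def)
  qed
  moreover have "r1 < sdist c1 c2 + r2"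
  proof (rule ccontr)
    assume "\<not> r1 < sdist c1 c2 + r2"
    then have "sdisk c2 r2 \<subseteq> sdisk c1 r1"
    proof (auto simp: sdisk_def)
      fix y assume y: "y \<in> S2" "sdist c2 y < r2" "\<not> r1 < sdist c1 c2 + r2"
      have "sdist c1 y \<le> sdist c1 c2 + sdist c2 y"
        using sdist_triangle S y by blast
      then show "sdist c1 y < r1"
        using y by (simp add: sdist_commute)
    qed
    then show False using assms by (simp add: is_bigon_def)
  qed
  ultimately show "\<bar>r1 - r2\<bar> < sdist c1 c2"
    by linarith
qed

lemma sdist_bounds_iff_inner_bounds:
  assumes S: "c1 \<in> S2" "c2 \<in> S2" and r: "0 < r1" "r1 < pi/2" "0 < r2" "r2 < pi/2"
  shows "\<bar>r1 - r2\<bar> < sdist c1 c2 \<and> sdist c1 c2 < r1 + r2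
    \<longleftrightarrow> cos (r1 + r2) < c1 \<bullet> c2 \<and> c1 \<bullet> c2 < cos (r1 - r2)"
proof -
  have d: "0 \<le> sdist c1 c2" "sdist c1 c2 \<le> pi"
    using arccos_bounded S2_inner_bounds[OF S] by (auto simp: sdist_def)
  have "cos (r1 + r2) < cos (sdist c1 c2) \<longleftrightarrow> sdist c1 c2 < r1 + r2"
    using d r by (intro cos_mono_less_eq) auto
  moreover have "cos (sdist c1 c2) < cos \<bar>r1 - r2\<bar> \<longleftrightarrow> \<bar>r1 - r2\<bar> < sdist c1 c2"
    using d r by (intro cos_mono_less_eq) auto
  ultimately show ?thesis
    using S by (auto simp: cos_sdist)
qed

lemma is_bigonI:
  assumes S: "c1 \<in> S2" "c2 \<in> S2" and r: "0 < r1" "r1 < pi/2" "0 < r2" "r2 < pi/2"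
    and d: "\<bar>r1 - r2\<bar> < sdist c1 c2" "sdist c1 c2 < r1 + r2"
  shows "is_bigon c1 r1 c2 r2"
proof -
  define d where "d = sdist c1 c2"
  have d0: "0 < d" "d < pi"
    using d r by (auto simp: d_def)
  then have "\<bar>cos d\<bar> < 1"
    using cos_monotone_0_pi[of 0 d] cos_monotone_0_pi[of d pi] by auto
  then have "\<bar>c1 \<bullet> c2\<bar> < 1"
    using S by (simp add: d_def cos_sdist)
  then obtain \<gamma> where \<gamma>: "\<And>t. \<gamma> t \<in> S2" "\<And>t. c1 \<bullet> \<gamma> t = cos t" "\<And>t. c2 \<bullet> \<gamma> t = cos (t - d)"
    using great_circle_through[OF S] unfolding d_def by metis
  have in1: "\<gamma> t \<in> sdisk c1 r1 \<longleftrightarrow> \<bar>t\<bar> < r1" if "\<bar>t\<bar> \<le> pi" for t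
    using that \<gamma> by (simp add: sdisk_def sdist_def arccos_cos_abs)
  have in2: "\<gamma> t \<in> sdisk c2 r2 \<longleftrightarrow> \<bar>t - d\<bar> < r2" if "\<bar>t - d\<bar> \<le> pi" for t
    using that \<gamma> by (simp add: sdisk_def sdist_def arccos_cos_abs)
  define t where "t = d * r1 / (r1 + r2)"
  have "0 < t" "t < r1" "0 < d - t" "d - t < r2"
  proof -
    have "d * r1 < r1 * (r1 + r2)" "d * r2 < r2 * (r1 + r2)"
      using mult_strict_right_mono[OF d(2), of r1] mult_strict_right_mono[OF d(2), of r2] r
      by (simp_all add: d_def mult.commute)
    moreover have "d - t = d * r2 / (r1 + r2)"
      using r by (simp add: t_def field_simps)
    ultimately show "0 < t" "t < r1" "0 < d - t" "d - t < r2"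
      using d0 r by (simp_all add: t_def divide_less_eq)
  qed
  then have "\<bar>t\<bar> < r1" "\<bar>t - d\<bar> < r2"
    by auto
  then have "\<gamma> t \<in> sdisk c1 r1 \<inter> sdisk c2 r2"
    using in1 in2 d0 r by auto
  moreover have "\<gamma> (- max 0 (r2 - d)) \<in> sdisk c1 r1 - sdisk c2 r2"
    using in1 in2 r d0 d by (auto simp: d_def)
  moreover have "\<gamma> (d + max 0 (r1 - d)) \<in> sdisk c2 r2 - sdisk c1 r1"
    using in1 in2 r d0 d by (auto simp: d_def)
  ultimately show ?thesis
    using S r unfolding is_bigon_def by blast
qed

lemma gram_det_pos:
  fixes k r1 r2 :: real
  assumes "cos (r1 + r2) < k" "k < cos (r1 - r2)"
  shows "0 < 1 - k\<^sup>2 - (cos r1)\<^sup>2 - (cos r2)\<^sup>2 + 2 * k * cos r1 * cos r2"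
proof -
  have sin_sq: "(sin r1)\<^sup>2 = 1 - (cos r1)\<^sup>2" "(sin r2)\<^sup>2 = 1 - (cos r2)\<^sup>2"
    by (simp_all add: sin_squared_eq)
  have "(cos (r1 - r2) - k) * (k - cos (r1 + r2))
      = - k\<^sup>2 + 2 * k * cos r1 * cos r2 - ((cos r1)\<^sup>2 * (cos r2)\<^sup>2 - (sin r1)\<^sup>2 * (sin r2)\<^sup>2)"
    by (simp add: cos_diff cos_add algebra_simps power2_eq_square)
  also have "\<dots> = 1 - k\<^sup>2 - (cos r1)\<^sup>2 - (cos r2)\<^sup>2 + 2 * k * cos r1 * cos r2"
    unfolding sin_sq by (simp add: algebra_simps power2_eq_square)
  finally show ?thesis
    using assms by (metis diff_gt_0_iff_gt mult_pos_pos)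
qed

lemma unit_tangent_cases:
  fixes c p w :: "real^3"
  assumes "c \<in> S2" "p \<in> S2" "0 < r" "r < pi/2" "c \<bullet> p = cos r" "w \<bullet> c = 0" "w \<bullet> p = 0" "norm w = 1"
  shows "\<exists>e. (e = 1 \<or> e = -1) \<and> w = (e / sin r) *\<^sub>R (c \<times> p)"
proof -
  have sr: "sin r > 0"
    using assms by (intro sin_gt_zero) auto
  have aa: "(c \<times> p) \<bullet> (c \<times> p) = (sin r)\<^sup>2"
    using cross_inner_cross_S2[OF assms(1,2)] assms(5) by (simp add: sin_squared_eq)
  then have a0: "c \<times> p \<noteq> 0"
    using sr by auto
  have w: "w = ((w \<bullet> (c \<times> p)) / ((c \<times> p) \<bullet> (c \<times> p))) *\<^sub>R (c \<times> p)"
    using orthogonal_both_eq_cross_multiple[OF a0] assms(6,7) by blast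
  define e where "e = (w \<bullet> (c \<times> p)) / sin r"
  have w2: "w = (e / sin r) *\<^sub>R (c \<times> p)"
    using w aa sr
    by (simp add: e_def power2_eq_square)
  have "1 = w \<bullet> w"
    using assms(8) by (simp add: dot_square_norm)
  also have "\<dots> = (e / sin r)\<^sup>2 * (sin r)\<^sup>2"
    by (subst (1 2) w2) (simp add: aa power2_eq_square)
  also have "\<dots> = e\<^sup>2"
    using sr by (simp add: power_divide)
  finally have "e\<^sup>2 = 1"
    by simp
  then have "e = 1 \<or> e = -1"
    by (simp add: power2_eq_1_iff)
  then show ?thesis
    using w2 by blast
qed

text \<open>The unit tangents at the corner are \<open>\<plusminus>(c\<^sub>i \<times> p) / sin r\<^sub>i\<close>, and the conditions
  \<open>w1 \<bullet> c2 > 0\<close>, \<open>w2 \<bullet> c1 > 0\<close> force opposite signs.\<close>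

lemma corner_tangents_inner:
  fixes c1 c2 p w1 w2 :: "real^3"
  assumes S: "c1 \<in> S2" "c2 \<in> S2" "p \<in> S2"
    and r: "0 < r1" "r1 < pi/2" "0 < r2" "r2 < pi/2"
    and p: "c1 \<bullet> p = cos r1" "c2 \<bullet> p = cos r2"
    and w1: "norm w1 = 1" "w1 \<bullet> p = 0" "w1 \<bullet> c1 = 0" "w1 \<bullet> c2 > 0"
    and w2: "norm w2 = 1" "w2 \<bullet> p = 0" "w2 \<bullet> c2 = 0" "w2 \<bullet> c1 > 0"
  shows "w1 \<bullet> w2 = (cos r1 * cos r2 - c1 \<bullet> c2) / (sin r1 * sin r2)"
proof -
  have s1: "sin r1 > 0"
    using r by (intro sin_gt_zero) auto
  have s2: "sin r2 > 0"
    using r by (intro sin_gt_zero) auto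
  obtain e1 where e1: "e1 = 1 \<or> e1 = -1" "w1 = (e1 / sin r1) *\<^sub>R (c1 \<times> p)"
    using unit_tangent_cases[OF S(1,3) r(1,2) p(1) w1(3,2,1)] by blast
  obtain e2 where e2: "e2 = 1 \<or> e2 = -1" "w2 = (e2 / sin r2) *\<^sub>R (c2 \<times> p)"
    using unit_tangent_cases[OF S(2,3) r(3,4) p(2) w2(3,2,1)] by blast
  define t where "t = (c1 \<times> p) \<bullet> c2"
  have t1: "e1 * t > 0"
    using w1(4) s1 e1(2)
    by (simp add: t_def zero_less_mult_iff zero_less_divide_iff)
  have "(e2 / sin r2) * (- t) > 0"
    using w2(4) e2(2) cross_inner_swap[of c2 p c1]
    by (simp add: t_def)
  moreover have "- e2 * t = sin r2 * ((e2 / sin r2) * (- t))"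
    using s2 by (simp add: field_simps)
  ultimately have t2: "- e2 * t > 0"
    using s2 by (simp add: divide_less_0_iff)
  have ee: "e1 * e2 = -1"
    using e1(1) e2(1) t1 t2 by auto
  have "w1 \<bullet> w2 = (e1 * e2) / (sin r1 * sin r2) * ((c1 \<times> p) \<bullet> (c2 \<times> p))"
    using e1(2) e2(2) by (simp add: mult.commute mult.left_commute)
  also have "(c1 \<times> p) \<bullet> (c2 \<times> p) = (c1 \<bullet> c2) * (p \<bullet> p) - (c1 \<bullet> p) * (p \<bullet> c2)"
    by (rule dot_cross)
  finally show ?thesis
    using ee S2_inner_self[OF S(3)] p s1 s2
    by (simp add: inner_commute field_simps)
qed

lemma exists_corner_tangents:
  fixes c1 c2 p :: "real^3"
  assumes S: "c1 \<in> S2" "c2 \<in> S2" "p \<in> S2"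
    and r: "0 < r1" "r1 < pi/2" "0 < r2" "r2 < pi/2"
    and p: "c1 \<bullet> p = cos r1" "c2 \<bullet> p = cos r2"
    and G: "1 - (c1 \<bullet> c2)\<^sup>2 - (cos r1)\<^sup>2 - (cos r2)\<^sup>2 + 2 * (c1 \<bullet> c2) * cos r1 * cos r2 > 0"
  shows "\<exists>w1 w2. norm w1 = 1 \<and> w1 \<bullet> p = 0 \<and> w1 \<bullet> c1 = 0 \<and> w1 \<bullet> c2 > 0 \<and>
                 norm w2 = 1 \<and> w2 \<bullet> p = 0 \<and> w2 \<bullet> c2 = 0 \<and> w2 \<bullet> c1 > 0"
proof -
  have s1: "sin r1 > 0"
    using r by (intro sin_gt_zero) auto
  have s2: "sin r2 > 0"
    using r by (intro sin_gt_zero) auto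
  define t where "t = (c1 \<times> p) \<bullet> c2"
  have "t\<^sup>2 = 1 - (c1 \<bullet> c2)\<^sup>2 - (cos r1)\<^sup>2 - (cos r2)\<^sup>2 + 2 * (c1 \<bullet> c2) * cos r1 * cos r2"
    unfolding t_def cross_inner_sq using S2_inner_self[OF S(1)] S2_inner_self[OF S(2)]
      S2_inner_self[OF S(3)] p
    by (simp add: inner_commute algebra_simps power2_eq_square)
  then have t0: "t \<noteq> 0"
    using G by auto
  define e where "e = sgn t"
  have et: "e * t > 0"
    using t0 by (simp add: e_def sgn_real_def)
  have ee: "e * e = 1"
    using t0 by (simp add: e_def sgn_real_def)
  define w1 where "w1 = (e / sin r1) *\<^sub>R (c1 \<times> p)"
  define w2 where "w2 = (- e / sin r2) *\<^sub>R (c2 \<times> p)"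
  have n1: "(c1 \<times> p) \<bullet> (c1 \<times> p) = (sin r1)\<^sup>2"
    using cross_inner_cross_S2[OF S(1,3)] p by (simp add: sin_squared_eq)
  have n2: "(c2 \<times> p) \<bullet> (c2 \<times> p) = (sin r2)\<^sup>2"
    using cross_inner_cross_S2[OF S(2,3)] p by (simp add: sin_squared_eq)
  have "w1 \<bullet> w1 = 1"
    unfolding w1_def using n1 s1 ee by (simp add: power2_eq_square)
  then have nw1: "norm w1 = 1"
    by (simp add: norm_eq_sqrt_inner)
  have "w2 \<bullet> w2 = 1"
    unfolding w2_def using n2 s2 ee by (simp add: power2_eq_square)
  then have nw2: "norm w2 = 1"
    by (simp add: norm_eq_sqrt_inner)
  have o1: "w1 \<bullet> p = 0" "w1 \<bullet> c1 = 0"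
    unfolding w1_def using dot_cross_self
    by (auto simp: inner_commute)
  have o2: "w2 \<bullet> p = 0" "w2 \<bullet> c2 = 0"
    unfolding w2_def using dot_cross_self
    by (auto simp: inner_commute)
  have q1: "w1 \<bullet> c2 > 0"
    unfolding w1_def using et s1
    by (simp add: t_def[symmetric] zero_less_mult_iff zero_less_divide_iff)
  have q2: "w2 \<bullet> c1 > 0"
    unfolding w2_def using et s2 cross_inner_swap[of c2 p c1]
    by (simp add: t_def[symmetric] zero_less_mult_iff zero_less_divide_iff)
  show ?thesis
    using nw1 nw2 o1 o2 q1 q2 by blast
qed

lemma bigon_corners_iff:
  assumes "c1 \<in> S2" "c2 \<in> S2" "0 < r1" "r1 < pi/2" "0 < r2" "r2 < pi/2"
  shows "p \<in> bigon_corners c1 r1 c2 r2 \<longleftrightarrow> p \<in> S2 \<and> c1 \<bullet> p = cos r1 \<and> c2 \<bullet> p = cos r2"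
  using assms sdist_eq_iff[of c1 p r1] sdist_eq_iff[of c2 p r2] by (auto simp: bigon_corners_def)

lemma abs_inner_less_one_if_bounds:
  assumes "0 < r1" "r1 < pi/2" "0 < r2" "r2 < pi/2"
    and "cos (r1 + r2) < k" "k < cos (r1 - r2)"
  shows "\<bar>k\<bar> < 1"
proof -
  have "-1 < cos (r1 + r2)"
    using assms cos_monotone_0_pi[of "r1 + r2" pi] by auto
  then show ?thesis
    using assms(5,6) cos_le_one[of "r1 - r2"] unfolding abs_less_iff by linarith
qed

lemma corner_tangents_inner_eq_cos_iff:
  assumes S: "c1 \<in> S2" "c2 \<in> S2" and r: "0 < r1" "r1 < pi/2" "0 < r2" "r2 < pi/2"
    and corner: "p \<in> bigon_corners c1 r1 c2 r2"
    and w: "norm w1 = 1 \<and> w1 \<bullet> p = 0 \<and> w1 \<bullet> c1 = 0 \<and> w1 \<bullet> c2 > 0 \<and>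
      norm w2 = 1 \<and> w2 \<bullet> p = 0 \<and> w2 \<bullet> c2 = 0 \<and> w2 \<bullet> c1 > 0"
  shows "w1 \<bullet> w2 = cos \<theta> \<longleftrightarrow> c1 \<bullet> c2 = centres_cos \<theta> r1 r2"
proof -
  have s: "0 < sin r1" "0 < sin r2"
    using r by (auto intro!: sin_gt_zero)
  have "w1 \<bullet> w2 = (cos r1 * cos r2 - c1 \<bullet> c2) / (sin r1 * sin r2)"
    using corner w bigon_corners_iff[OF S r] by (intro corner_tangents_inner[OF S _ r]) auto
  moreover have "cos \<theta> = (cos r1 * cos r2 - centres_cos \<theta> r1 r2) / (sin r1 * sin r2)"
    using s by (simp add: centres_cos_def field_simps)
  ultimately show ?thesis
    using s by (simp add: divide_cancel_right)
qed

lemma bigon_angle_if_centres_cos: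
  assumes S: "c1 \<in> S2" "c2 \<in> S2" and r: "0 < r1" "r1 < pi/2" "0 < r2" "r2 < pi/2"
    and "0 < \<theta>" "\<theta> < pi" "c1 \<bullet> c2 = centres_cos \<theta> r1 r2"
  shows "bigon_angle c1 r1 c2 r2 \<theta>"
  unfolding bigon_angle_def
proof (intro ballI allI impI)
  fix p w1 w2
  assume corner: "p \<in> bigon_corners c1 r1 c2 r2"
    and w: "norm w1 = 1 \<and> w1 \<bullet> p = 0 \<and> w1 \<bullet> c1 = 0 \<and> w1 \<bullet> c2 > 0 \<and>
      norm w2 = 1 \<and> w2 \<bullet> p = 0 \<and> w2 \<bullet> c2 = 0 \<and> w2 \<bullet> c1 > 0"
  have "w1 \<bullet> w2 = cos \<theta>"
    by (rule corner_tangents_inner_eq_cos_iff[OF S r corner w, THEN iffD2]) (rule assms(9))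
  then show "arccos (w1 \<bullet> w2) = \<theta>"
    using assms(7,8) by (simp add: arccos_cos)
qed

lemma centres_cos_if_bigon_angle:
  assumes B: "is_bigon c1 r1 c2 r2" and angle: "bigon_angle c1 r1 c2 r2 \<theta>"
  shows "c1 \<bullet> c2 = centres_cos \<theta> r1 r2"
proof -
  have S: "c1 \<in> S2" "c2 \<in> S2" and r: "0 < r1" "r1 < pi/2" "0 < r2" "r2 < pi/2"
    using B by (auto simp: is_bigon_def)
  have bounds: "cos (r1 + r2) < c1 \<bullet> c2" "c1 \<bullet> c2 < cos (r1 - r2)"
    using bigon_centre_dist[OF B] sdist_bounds_iff_inner_bounds[OF S r] by auto
  obtain p where p: "p \<in> S2" "c1 \<bullet> p = cos r1" "c2 \<bullet> p = cos r2"
    using exists_S2_inner_pair[OF S abs_inner_less_one_if_bounds[OF r bounds]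
        gram_det_pos[OF bounds]] by blast
  then have corner: "p \<in> bigon_corners c1 r1 c2 r2"
    using bigon_corners_iff[OF S r] by simp
  obtain w1 w2 where w: "norm w1 = 1 \<and> w1 \<bullet> p = 0 \<and> w1 \<bullet> c1 = 0 \<and> w1 \<bullet> c2 > 0 \<and>
      norm w2 = 1 \<and> w2 \<bullet> p = 0 \<and> w2 \<bullet> c2 = 0 \<and> w2 \<bullet> c1 > 0"
    using exists_corner_tangents[OF S p(1) r p(2,3) gram_det_pos[OF bounds]] by blast
  have "\<bar>w1 \<bullet> w2\<bar> \<le> 1"
    using Cauchy_Schwarz_ineq2[of w1 w2] w by simp
  moreover have "arccos (w1 \<bullet> w2) = \<theta>"
    using angle corner w unfolding bigon_angle_def by blast
  ultimately have "w1 \<bullet> w2 = cos \<theta>"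
    by (auto simp: cos_arccos_abs)
  then show ?thesis
    by (rule corner_tangents_inner_eq_cos_iff[OF S r corner w, THEN iffD1])
qed

section \<open>Length of a side\<close>

definition cos_ge_set :: "real \<Rightarrow> real \<Rightarrow> real \<Rightarrow> real \<Rightarrow> real set" where
  "cos_ge_set a b k c = {t \<in> {a..<b}. k \<le> cos (t - c)}"

lemma cos_ge_set_borel: "cos_ge_set a b k c \<in> sets lborel"
proof -
  have "closed {t::real. k \<le> cos (t - c)}"
    by (intro closed_Collect_le continuous_intros)
  then have "{a..<b} \<inter> {t::real. k \<le> cos (t - c)} \<in> sets borel"
    using borel_closed by (intro sets.Int) auto
  moreover have "cos_ge_set a b k c = {a..<b} \<inter> {t::real. k \<le> cos (t - c)}"
    by (auto simp: cos_ge_set_def)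
  ultimately show ?thesis
    by simp
qed

lemma cos_ge_set_finite: "emeasure lborel (cos_ge_set a b k c) \<noteq> \<infinity>"
proof -
  have "emeasure lborel (cos_ge_set a b k c) \<le> emeasure lborel {a..b}"
    by (intro emeasure_mono) (auto simp: cos_ge_set_def)
  also have "\<dots> < \<infinity>"
    by (simp add: emeasure_lborel_Icc_eq)
  finally show ?thesis
    by simp
qed

lemma measure_cos_ge_set_shift:
  "measure lborel (cos_ge_set (a + 2*pi) (b + 2*pi) k c) = measure lborel (cos_ge_set a b k c)"
proof -
  have "cos_ge_set (a + 2*pi) (b + 2*pi) k c = (+) (2*pi) ` cos_ge_set a b k c"
  proof (intro set_eqI iffI)
    fix t
    assume "t \<in> cos_ge_set (a + 2*pi) (b + 2*pi) k c"
    moreover have "cos (t - 2*pi - c) = cos (t - c)"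
      using cos_periodic[of "t - 2*pi - c"] by (simp add: algebra_simps)
    ultimately have "t - 2*pi \<in> cos_ge_set a b k c"
      by (auto simp: cos_ge_set_def)
    then show "t \<in> (+) (2*pi) ` cos_ge_set a b k c"
      by (intro image_eqI[of _ _ "t - 2*pi"]) auto
  next
    fix t
    assume "t \<in> (+) (2*pi) ` cos_ge_set a b k c"
    then obtain s where s: "s \<in> cos_ge_set a b k c" "t = 2*pi + s"
      by auto
    moreover have "cos (2*pi + s - c) = cos (s - c)"
      using cos_periodic[of "s - c"] by (simp add: algebra_simps)
    ultimately show "t \<in> cos_ge_set (a + 2*pi) (b + 2*pi) k c"
      by (auto simp: cos_ge_set_def)
  qed
  then have "measure lebesgue (cos_ge_set (a + 2*pi) (b + 2*pi) k c)
      = measure lebesgue (cos_ge_set a b k c)"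
    by (simp add: measure_translation)
  then show ?thesis
    using cos_ge_set_borel by (simp add: measure_completion)
qed

lemma measure_cos_ge_set_split:
  assumes "x \<le> y" "y \<le> z"
  shows "measure lborel (cos_ge_set x z k c)
    = measure lborel (cos_ge_set x y k c) + measure lborel (cos_ge_set y z k c)"
proof -
  have "cos_ge_set x z k c = cos_ge_set x y k c \<union> cos_ge_set y z k c"
    using assms by (auto simp: cos_ge_set_def)
  moreover have "cos_ge_set x y k c \<inter> cos_ge_set y z k c = {}"
    by (auto simp: cos_ge_set_def)
  ultimately show ?thesis
    using cos_ge_set_borel cos_ge_set_finite by (simp add: measure_Union)
qed

lemma measure_cos_ge_set_rotate:
  assumes "0 \<le> a" "a \<le> 2*pi"
  shows "measure lborel (cos_ge_set 0 (2*pi) k c) = measure lborel (cos_ge_set a (a + 2*pi) k c)"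
  using measure_cos_ge_set_split[of 0 a "2*pi" k c] measure_cos_ge_set_split[of a "2*pi" "a + 2*pi" k c]
    measure_cos_ge_set_shift[of 0 a k c] assms
  by simp

lemma measure_cos_ge_set_centred:
  assumes "0 < \<beta>" "\<beta> < pi"
  shows "measure lborel (cos_ge_set (c - pi) (c + pi) (cos \<beta>) c) = 2 * \<beta>"
proof -
  have "cos \<beta> \<le> cos (t - c) \<longleftrightarrow> \<bar>t - c\<bar> \<le> \<beta>" if "-pi \<le> t - c" "t - c \<le> pi" for t
    using that assms cos_mono_le_eq[of \<beta> "\<bar>t - c\<bar>"] by auto
  then have "cos_ge_set (c - pi) (c + pi) (cos \<beta>) c = {c - \<beta> .. c + \<beta>}"
    using assms by (auto simp: cos_ge_set_def abs_le_iff)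
  then show ?thesis
    using assms by simp
qed

lemma measure_cos_ge:
  assumes k: "-1 < k" "k < 1" and t0: "0 \<le> t0" "t0 < 2*pi"
  shows "measure lborel {t \<in> {0..<2*pi}. k \<le> cos (t - t0)} = 2 * arccos k"
proof -
  define c where "c = (if pi \<le> t0 then t0 else t0 + 2*pi)"
  have "cos (t - c) = cos (t - t0)" for t
    using cos_periodic[of "t - t0 - 2*pi"] by (simp add: c_def algebra_simps)
  then have "{t \<in> {0..<2*pi}. k \<le> cos (t - t0)} = cos_ge_set 0 (2*pi) (cos (arccos k)) c"
    using k by (simp add: cos_ge_set_def)
  moreover have "measure lborel (cos_ge_set 0 (2*pi) (cos (arccos k)) c)
      = measure lborel (cos_ge_set (c - pi) (c + pi) (cos (arccos k)) c)"
    using measure_cos_ge_set_rotate[of "c - pi"] t0 by (simp add: c_def algebra_simps)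
  ultimately show ?thesis
    using measure_cos_ge_set_centred[of "arccos k" c] arccos_lt_bounded k by simp
qed

lemma inner_sq_sum_orthonormal:
  fixes c u v x :: "real^3"
  assumes n: "norm c = 1" "norm u = 1" "norm v = 1"
    and o: "u \<bullet> v = 0" "u \<bullet> c = 0" "v \<bullet> c = 0"
  shows "(x \<bullet> c)\<^sup>2 + (x \<bullet> u)\<^sup>2 + (x \<bullet> v)\<^sup>2 = x \<bullet> x"
proof -
  have cc: "c \<bullet> c = 1" "u \<bullet> u = 1" "v \<bullet> v = 1"
    using n by (simp_all add: dot_square_norm)
  define w where "w = c \<times> u"
  have ww: "w \<bullet> w = 1"
    unfolding w_def using norm_cross[of c u] n o
    by (simp add: power2_norm_eq_inner[symmetric] inner_commute)
  then have w0: "c \<times> u \<noteq> 0"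
    by (auto simp: w_def)
  have v: "v = ((v \<bullet> w) / (w \<bullet> w)) *\<^sub>R w"
    using orthogonal_both_eq_cross_multiple[OF w0] o by (simp add: w_def inner_commute)
  have "1 = v \<bullet> v"
    using cc by simp
  also have "\<dots> = (v \<bullet> w)\<^sup>2"
    using ww by (subst (1 2) v) (simp add: power2_eq_square)
  finally have vw: "(v \<bullet> w)\<^sup>2 = 1"
    by simp
  have "(x \<bullet> v)\<^sup>2 = (v \<bullet> w)\<^sup>2 * (x \<bullet> w)\<^sup>2"
    using ww
    by (subst v) (simp add: power2_eq_square)
  also have "\<dots> = (x \<bullet> w)\<^sup>2"
    using vw by simp
  also have "\<dots> = ((c \<times> u) \<bullet> x)\<^sup>2"
    by (simp add: w_def inner_commute)
  also have "\<dots> = x \<bullet> x - (u \<bullet> x)\<^sup>2 - (x \<bullet> c)\<^sup>2"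
    unfolding cross_inner_sq using cc o by (simp add: inner_commute power2_eq_square)
  finally show ?thesis
    by (simp add: inner_commute)
qed

lemma S2_tangent_components:
  fixes c c' u v :: "real^3"
  assumes S: "c \<in> S2" "c' \<in> S2" and k: "\<bar>c \<bullet> c'\<bar> < 1"
    and uv: "norm u = 1" "norm v = 1" "u \<bullet> v = 0" "u \<bullet> c = 0" "v \<bullet> c = 0"
  obtains t0 where "0 \<le> t0" "t0 < 2*pi"
    "c' \<bullet> u = sqrt (1 - (c \<bullet> c')\<^sup>2) * cos t0" "c' \<bullet> v = sqrt (1 - (c \<bullet> c')\<^sup>2) * sin t0"
proof -
  define s where "s = sqrt (1 - (c \<bullet> c')\<^sup>2)"
  have "0 < 1 - (c \<bullet> c')\<^sup>2"
    using k by (simp add: abs_square_less_1)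
  then have s: "0 < s" "s * s = 1 - (c \<bullet> c')\<^sup>2"
    by (simp_all add: s_def)
  have "(c' \<bullet> c)\<^sup>2 + (c' \<bullet> u)\<^sup>2 + (c' \<bullet> v)\<^sup>2 = c' \<bullet> c'"
    by (rule inner_sq_sum_orthonormal) (use uv S in \<open>auto simp: S2_def\<close>)
  then have "(c' \<bullet> u)\<^sup>2 + (c' \<bullet> v)\<^sup>2 = s * s"
    using S2_inner_self[OF S(2)] s by (simp add: inner_commute)
  moreover have "(c' \<bullet> u / s)\<^sup>2 + (c' \<bullet> v / s)\<^sup>2 = ((c' \<bullet> u)\<^sup>2 + (c' \<bullet> v)\<^sup>2) / (s * s)"
    by (simp add: power_divide power2_eq_square add_divide_distrib)
  ultimately have "(c' \<bullet> u / s)\<^sup>2 + (c' \<bullet> v / s)\<^sup>2 = 1"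
    using s(1) by simp
  then obtain t0 where "0 \<le> t0" "t0 < 2*pi" "c' \<bullet> u / s = cos t0" "c' \<bullet> v / s = sin t0"
    by (rule sincos_total_2pi)
  then show ?thesis
    using that s(1) by (auto simp: s_def[symmetric] field_simps)
qed

lemma circle_param_in_bigon_side_iff:
  fixes c c' u v :: "real^3"
  assumes S: "c \<in> S2" "c' \<in> S2" and k: "\<bar>c \<bullet> c'\<bar> < 1"
    and r: "0 < r" "r < pi" "0 \<le> r'" "r' \<le> pi"
    and uv: "norm u = 1" "norm v = 1" "u \<bullet> v = 0" "u \<bullet> c = 0" "v \<bullet> c = 0"
    and t0: "c' \<bullet> u = sqrt (1 - (c \<bullet> c')\<^sup>2) * cos t0" "c' \<bullet> v = sqrt (1 - (c \<bullet> c')\<^sup>2) * sin t0"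
  shows "circle_param c r u v t \<in> bigon_side c r c' r'
    \<longleftrightarrow> (cos r' - cos r * (c \<bullet> c')) / (sin r * sqrt (1 - (c \<bullet> c')\<^sup>2)) \<le> cos (t - t0)"
proof -
  define s where "s = sqrt (1 - (c \<bullet> c')\<^sup>2)"
  define w where "w = cos t *\<^sub>R u + sin t *\<^sub>R v"
  define x where "x = circle_param c r u v t"
  have pos: "0 < sin r * s"
    using k r by (simp add: s_def abs_square_less_1 sin_gt_zero)
  have uu: "u \<bullet> u = 1" "v \<bullet> v = 1" "v \<bullet> u = 0"
    using uv by (simp_all add: dot_square_norm inner_commute)
  have "c \<bullet> w = 0"
    using uv by (simp add: w_def inner_add_right inner_commute)
  moreover have "w \<bullet> w = 1"
    using uu by (simp add: w_def inner_add_left inner_add_right inner_commute[of u v]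
        power2_eq_square[symmetric])
  ultimately have cc: "c \<bullet> c = 1" "c \<bullet> w = 0" "w \<bullet> w = 1"
    using S2_inner_self[OF S(1)] by simp_all
  have x: "x = cos r *\<^sub>R c + sin r *\<^sub>R w"
    by (simp add: x_def circle_param_def w_def)
  have "x \<bullet> x = (cos r)\<^sup>2 + (sin r)\<^sup>2"
    unfolding x using cc by (simp add: inner_add_left inner_add_right inner_commute power2_eq_square)
  then have xS: "x \<in> S2"
    by (simp add: S2_def norm_eq_sqrt_inner)
  have "c \<bullet> x = cos r"
    unfolding x using cc by (simp add: inner_add_right)
  then have "sdist c x = r"
    using sdist_eq_iff[OF S(1) xS] r by simp
  moreover have "c' \<bullet> x = cos r * (c \<bullet> c') + sin r * (s * cos (t - t0))"
    unfolding x w_def using t0 by (simp add: inner_add_right inner_commute s_def cos_diff algebra_simps)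
  ultimately have "x \<in> bigon_side c r c' r' \<longleftrightarrow> cos r' - cos r * (c \<bullet> c') \<le> cos (t - t0) * (sin r * s)"
    using sdist_le_iff[OF S(2) xS r(3,4)] xS by (auto simp: bigon_side_def algebra_simps)
  then show ?thesis
    using pos by (simp add: x_def s_def pos_divide_le_eq)
qed

lemma circle_arc_length_bigon_side:
  fixes c c' :: "real^3"
  assumes S: "c \<in> S2" "c' \<in> S2" and k: "\<bar>c \<bullet> c'\<bar> < 1"
    and r: "0 < r" "r < pi" "0 \<le> r'" "r' \<le> pi"
    and k1: "-1 < k1" "k1 < 1"
    and k1_def: "k1 = (cos r' - cos r * (c \<bullet> c')) / (sin r * sqrt (1 - (c \<bullet> c')\<^sup>2))"
  shows "circle_arc_length c r (bigon_side c r c' r') (sin r * (2 * arccos k1))"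
  unfolding circle_arc_length_def
proof (intro allI impI)
  fix u v :: "real^3"
  assume uv: "norm u = 1 \<and> norm v = 1 \<and> u \<bullet> v = 0 \<and> u \<bullet> c = 0 \<and> v \<bullet> c = 0"
  then obtain t0 where t0: "0 \<le> t0" "t0 < 2*pi"
    "c' \<bullet> u = sqrt (1 - (c \<bullet> c')\<^sup>2) * cos t0" "c' \<bullet> v = sqrt (1 - (c \<bullet> c')\<^sup>2) * sin t0"
    using S2_tangent_components[OF S k] by metis
  have "{t \<in> {0..<2*pi}. circle_param c r u v t \<in> bigon_side c r c' r'}
      = {t \<in> {0..<2*pi}. k1 \<le> cos (t - t0)}"
    using circle_param_in_bigon_side_iff[OF S k r _ _ _ _ _ t0(3,4)] uv k1_def by auto
  then show "sin r * (2 * arccos k1)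
      = sin r * measure lborel {t \<in> {0..<2*pi}. circle_param c r u v t \<in> bigon_side c r c' r'}"
    using measure_cos_ge[OF k1 t0(1,2)] by simp
qed
lemma side_total_curvature_iff_arccos:
  fixes c c' :: "real^3"
  assumes S: "c \<in> S2" "c' \<in> S2" and k: "\<bar>c \<bullet> c'\<bar> < 1"
    and r: "0 < r" "r < pi" "0 \<le> r'" "r' \<le> pi"
    and k1: "-1 < k1" "k1 < 1"
    and k1d: "k1 = (cos r' - cos r * (c \<bullet> c')) / (sin r * sqrt (1 - (c \<bullet> c')\<^sup>2))"
  shows "side_total_curvature c r c' r' T \<longleftrightarrow> T = 2 * cos r * arccos k1"
proof -
  have sr: "sin r > 0"
    using r by (intro sin_gt_zero) auto
  have AL: "circle_arc_length c r (bigon_side c r c' r') (sin r * (2 * arccos k1))"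
    by (rule circle_arc_length_bigon_side[OF S k r k1 k1d])
  have cot: "sin r * (2 * arccos k1) * cot r = 2 * cos r * arccos k1"
    using sr by (simp add: cot_def)
  obtain u v where uv: "norm u = 1 \<and> norm v = 1 \<and> u \<bullet> v = 0 \<and> u \<bullet> c = 0 \<and> v \<bullet> c = 0"
    using S2_adapted_frame[OF S k] by blast
  show ?thesis
  proof
    assume "side_total_curvature c r c' r' T"
    then obtain L where L: "circle_arc_length c r (bigon_side c r c' r') L" "T = L * cot r"
      by (auto simp: side_total_curvature_def)
    define M where "M = measure lborel {t \<in> {0..<2*pi}. circle_param c r u v t \<in> bigon_side c r c' r'}"
    have "L = sin r * M"
      using L(1) uv unfolding circle_arc_length_def M_def by blast
    moreover have "sin r * (2 * arccos k1) = sin r * M"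
      using AL uv unfolding circle_arc_length_def M_def by blast
    ultimately have "L = sin r * (2 * arccos k1)"
      by auto
    then show "T = 2 * cos r * arccos k1"
      using L(2) cot by simp
  next
    assume "T = 2 * cos r * arccos k1"
    then show "side_total_curvature c r c' r' T"
      unfolding side_total_curvature_def
      using AL cot by (intro exI[of _ "sin r * (2 * arccos k1)"]) auto
  qed
qed

lemma arccos_eq_arccot_half_arc_cot:
  assumes "0 < \<theta>" "\<theta> < pi" "0 < r1" "r1 < pi/2" "0 < r2" "r2 < pi/2"
  defines "K \<equiv> centres_cos \<theta> r1 r2"
  defines "k \<equiv> (cos r2 - cos r1 * K) / (sin r1 * sqrt (1 - K\<^sup>2))"
  shows "-1 < k" "k < 1" "arccos k = arccot (half_arc_cot \<theta> r1 r2)"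
proof -
  define X where "X = sin r1 * cos r2 + cos r1 * sin r2 * cos \<theta>"
  define Y where "Y = sin r2 * sin \<theta>"
  define R where "R = sqrt (X\<^sup>2 + Y\<^sup>2)"
  have s: "0 < sin r1" "0 < sin r2" "0 < sin \<theta>"
    using assms by (auto intro!: sin_gt_zero)
  then have Y: "0 < Y"
    by (simp add: Y_def)
  have "1 - K\<^sup>2 = X\<^sup>2 + Y\<^sup>2"
    using centres_cos_sum_squares[of r1 r2 \<theta>] by (simp add: K_def X_def Y_def)
  then have "k = X / R"
    using s cos_diff_centres_cos[of r2 r1 \<theta>] by (simp add: k_def K_def X_def R_def)
  moreover have "\<bar>X\<bar> < R"
    using Y real_sqrt_less_mono[of "X\<^sup>2" "X\<^sup>2 + Y\<^sup>2"] by (simp add: R_def)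
  moreover have "0 < R"
    using Y by (simp add: R_def add_nonneg_pos)
  ultimately show "-1 < k" "k < 1"
    by (auto simp: abs_less_iff divide_less_eq less_divide_eq)
  have "sqrt (1 + (X / Y)\<^sup>2) = R / Y"
    using Y by (simp add: R_def field_simps real_sqrt_divide)
  then have "cos (arccot (X / Y)) = k"
    using Y \<open>k = X / R\<close> \<open>\<bar>X\<bar> < R\<close> by (simp add: cos_arccot)
  moreover have "half_arc_cot \<theta> r1 r2 = X / Y"
    using s by (simp add: half_arc_cot_eq X_def Y_def)
  ultimately show "arccos k = arccot (half_arc_cot \<theta> r1 r2)"
    using arccot_bounds[of "X / Y"] by (auto intro: arccos_cos)
qed

lemma side_total_curvature_iff_side_curv:
  assumes S: "c1 \<in> S2" "c2 \<in> S2" and "0 < \<theta>" "\<theta> < pi"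
    and r: "0 < r1" "r1 < pi/2" "0 < r2" "r2 < pi/2"
    and c12: "c1 \<bullet> c2 = centres_cos \<theta> r1 r2"
  shows "side_total_curvature c1 r1 c2 r2 T \<longleftrightarrow> T = side_curv \<theta> r1 r2"
proof -
  have "sin r1 > 0" "sin r2 > 0"
    using r by (auto intro!: sin_gt_zero)
  then have "\<bar>c1 \<bullet> c2\<bar> < 1"
    using centres_cos_bounds[OF assms(3,4)] abs_inner_less_one_if_bounds[OF r] by (simp add: c12)
  note k = arccos_eq_arccot_half_arc_cot[OF assms(3,4) r, folded c12]
  show ?thesis
    using side_total_curvature_iff_arccos[OF S \<open>\<bar>c1 \<bullet> c2\<bar> < 1\<close> _ _ _ _ k(1,2) refl] k(3) r
    by (simp add: side_curv_def)
qed

section \<open>Bigons with prescribed angle and curvatures\<close>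

definition hyperplane_reflection :: "'a::real_inner \<Rightarrow> 'a \<Rightarrow> 'a" where
  "hyperplane_reflection n x = x - (2 * (x \<bullet> n) / (n \<bullet> n)) *\<^sub>R n"

lemma orthogonal_transformation_hyperplane_reflection:
  "orthogonal_transformation (hyperplane_reflection n)"
proof -
  have lin: "linear (hyperplane_reflection n)"
    by (rule linearI) (simp_all add: hyperplane_reflection_def inner_add_left algebra_simps add_divide_distrib scaleR_add_left
        scaleR_diff_right)
  have "norm (hyperplane_reflection n v) = norm v" for v
  proof (cases "n = 0")
    case True
    then show ?thesis
      by (simp add: hyperplane_reflection_def)
  next
    case False
    then have nn: "n \<bullet> n > 0"
      by simp
    have "hyperplane_reflection n v \<bullet> hyperplane_reflection n v = v \<bullet> v"
      unfolding hyperplane_reflection_def using nn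
      by (simp add: inner_diff_left inner_diff_right inner_commute field_simps power2_eq_square)
    then show ?thesis
      by (simp add: norm_eq_sqrt_inner)
  qed
  then show ?thesis
    using lin by (simp add: orthogonal_transformation)
qed

lemma hyperplane_reflection_swap:
  fixes x y :: "'a::real_inner"
  assumes "norm x = norm y"
  shows "hyperplane_reflection (x - y) x = y"
proof (cases "x = y")
  case True
  then show ?thesis
    by (simp add: hyperplane_reflection_def)
next
  case False
  have xx: "x \<bullet> x = y \<bullet> y"
    using assms by (simp add: dot_square_norm)
  have nn: "(x - y) \<bullet> (x - y) = 2 * (x \<bullet> x - x \<bullet> y)"
    using xx by (simp add: inner_diff_left inner_diff_right inner_commute)
  have xn: "x \<bullet> (x - y) = x \<bullet> x - x \<bullet> y"
    by (simp add: inner_diff_right)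
  have D: "(x - y) \<bullet> (x - y) = 2 * (x \<bullet> (x - y))"
    using nn xn by simp
  have N: "(x - y) \<bullet> (x - y) \<noteq> 0"
    using False by simp
  have "2 * (x \<bullet> (x - y)) \<noteq> 0"
    using N unfolding D .
  then have e: "2 * (x \<bullet> (x - y)) / ((x - y) \<bullet> (x - y)) = 1"
    unfolding D by simp
  show ?thesis
    unfolding hyperplane_reflection_def e by simp
qed

lemma hyperplane_reflection_fixed: "z \<bullet> n = 0 \<Longrightarrow> hyperplane_reflection n z = z"
  by (simp add: hyperplane_reflection_def)

lemma orthogonal_transformation_exists_pair:
  fixes a1 a2 b1 b2 :: "'a::real_inner"
  assumes n: "norm a1 = norm b1" "norm a2 = norm b2"
    and g: "a1 \<bullet> a2 = b1 \<bullet> b2"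
  shows "\<exists>f. orthogonal_transformation f \<and> f a1 = b1 \<and> f a2 = b2"
proof -
  define f1 where "f1 = hyperplane_reflection (a1 - b1)"
  have o1: "orthogonal_transformation f1"
    unfolding f1_def by (rule orthogonal_transformation_hyperplane_reflection)
  have f1a: "f1 a1 = b1"
    unfolding f1_def using n by (intro hyperplane_reflection_swap) simp
  define x where "x = f1 a2"
  have nx: "norm x = norm b2"
    using n orthogonal_transformation_norm[OF o1] by (simp add: x_def)
  have xb: "b1 \<bullet> x = b1 \<bullet> b2"
  proof -
    have "b1 \<bullet> x = f1 a1 \<bullet> f1 a2"
      by (simp add: f1a x_def)
    also have "\<dots> = a1 \<bullet> a2"
      using o1 by (simp add: orthogonal_transformation_def)
    finally show ?thesis
      using g by simp
  qed
  define f2 where "f2 = hyperplane_reflection (x - b2)"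
  have o2: "orthogonal_transformation f2"
    unfolding f2_def by (rule orthogonal_transformation_hyperplane_reflection)
  have f2x: "f2 x = b2"
    unfolding f2_def using nx by (rule hyperplane_reflection_swap)
  have f2b: "f2 b1 = b1"
    unfolding f2_def using xb by (intro hyperplane_reflection_fixed) (simp add: inner_diff_right)
  show ?thesis
    using orthogonal_transformation_compose[OF o2 o1] f1a f2b f2x
    by (intro exI[of _ "f2 \<circ> f1"]) (simp add: x_def)
qed

lemma sdisk_image:
  assumes o: "orthogonal_transformation f"
  shows "f ` sdisk c r = sdisk (f c) r"
proof -
  have ip: "f x \<bullet> f y = x \<bullet> y" for x y using o by (simp add: orthogonal_transformation_def)
  have nm: "norm (f x) = norm x" for x using orthogonal_transformation_norm[OF o] .
  show ?thesis
  proof (intro set_eqI iffI)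
    fix y assume "y \<in> f ` sdisk c r"
    then obtain x where "x \<in> sdisk c r" "y = f x"
      by auto
    then show "y \<in> sdisk (f c) r"
      by (auto simp: sdisk_def S2_def sdist_def ip nm)
  next
    fix y assume y: "y \<in> sdisk (f c) r"
    obtain x where x: "y = f x"
      using orthogonal_transformation_surj[OF o] by (metis surjD)
    then have "x \<in> sdisk c r"
      using y by (auto simp: sdisk_def S2_def sdist_def ip nm)
    then show "y \<in> f ` sdisk c r"
      using x by auto
  qed
qed

lemma exists_S2_pair_with_inner:
  assumes "\<bar>k\<bar> \<le> 1"
  obtains c1 c2 where "c1 \<in> S2" "c2 \<in> S2" "c1 \<bullet> c2 = k"
proof
  define c1 :: "real^3" where "c1 = axis 1 1"
  define c2 :: "real^3" where "c2 = k *\<^sub>R axis 1 1 + sqrt (1 - k\<^sup>2) *\<^sub>R axis 2 1"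
  have k: "k\<^sup>2 \<le> 1"
    using assms by (simp add: abs_square_le_1)
  have "c1 \<bullet> c1 = 1" "c2 \<bullet> c2 = 1"
    using k by (simp_all add: c1_def c2_def inner_add_left inner_add_right inner_axis_axis
        power2_eq_square)
  then show "c1 \<in> S2" "c2 \<in> S2"
    by (simp_all add: S2_def norm_eq_sqrt_inner)
  show "c1 \<bullet> c2 = k"
    by (simp add: c1_def c2_def inner_add_right inner_axis_axis)
qed

lemma bigon_with_data_iff:
  assumes "0 < \<theta>" "\<theta> < pi"
  shows "(is_bigon c1 r1 c2 r2 \<and> bigon_angle c1 r1 c2 r2 \<theta> \<and>
          side_total_curvature c1 r1 c2 r2 T1 \<and> side_total_curvature c2 r2 c1 r1 T2)
    \<longleftrightarrow> (c1 \<in> S2 \<and> c2 \<in> S2 \<and> 0 < r1 \<and> r1 < pi/2 \<and> 0 < r2 \<and> r2 < pi/2 \<and>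
          c1 \<bullet> c2 = centres_cos \<theta> r1 r2 \<and> side_curv \<theta> r1 r2 = T1 \<and> side_curv \<theta> r2 r1 = T2)"
proof -
  have curv: "side_total_curvature c1 r1 c2 r2 T1 \<and> side_total_curvature c2 r2 c1 r1 T2
      \<longleftrightarrow> side_curv \<theta> r1 r2 = T1 \<and> side_curv \<theta> r2 r1 = T2"
    if S: "c1 \<in> S2" "c2 \<in> S2" and r: "0 < r1" "r1 < pi/2" "0 < r2" "r2 < pi/2"
      and c12: "c1 \<bullet> c2 = centres_cos \<theta> r1 r2"
    using side_total_curvature_iff_side_curv[OF S assms r c12]
      side_total_curvature_iff_side_curv[OF S(2,1) assms r(3,4,1,2)] c12
    by (auto simp: inner_commute centres_cos_commute)
  show ?thesis
  proof
    assume H: "is_bigon c1 r1 c2 r2 \<and> bigon_angle c1 r1 c2 r2 \<theta> \<and>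
        side_total_curvature c1 r1 c2 r2 T1 \<and> side_total_curvature c2 r2 c1 r1 T2"
    then have "c1 \<in> S2" "c2 \<in> S2" "0 < r1" "r1 < pi/2" "0 < r2" "r2 < pi/2"
      by (auto simp: is_bigon_def)
    moreover have "c1 \<bullet> c2 = centres_cos \<theta> r1 r2"
      using H centres_cos_if_bigon_angle by blast
    ultimately show "c1 \<in> S2 \<and> c2 \<in> S2 \<and> 0 < r1 \<and> r1 < pi/2 \<and> 0 < r2 \<and> r2 < pi/2 \<and>
        c1 \<bullet> c2 = centres_cos \<theta> r1 r2 \<and> side_curv \<theta> r1 r2 = T1 \<and> side_curv \<theta> r2 r1 = T2"
      using H curv by blast
  next
    assume H: "c1 \<in> S2 \<and> c2 \<in> S2 \<and> 0 < r1 \<and> r1 < pi/2 \<and> 0 < r2 \<and> r2 < pi/2 \<and>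
        c1 \<bullet> c2 = centres_cos \<theta> r1 r2 \<and> side_curv \<theta> r1 r2 = T1 \<and> side_curv \<theta> r2 r1 = T2"
    then have "0 < sin r1" "0 < sin r2"
      by (auto intro!: sin_gt_zero)
    then have "is_bigon c1 r1 c2 r2"
      using H centres_cos_bounds[OF assms] sdist_bounds_iff_inner_bounds[of c1 c2 r1 r2]
      by (intro is_bigonI) auto
    then show "is_bigon c1 r1 c2 r2 \<and> bigon_angle c1 r1 c2 r2 \<theta> \<and>
        side_total_curvature c1 r1 c2 r2 T1 \<and> side_total_curvature c2 r2 c1 r1 T2"
      using H curv bigon_angle_if_centres_cos[OF _ _ _ _ _ _ assms] by blast
  qed
qed

lemma exists_bigon_with_data:
  assumes "0 < \<theta>" "\<theta> < pi" "0 < T1" "0 < T2" "T1 + T2 < 2 * \<theta>"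
  shows "\<exists>c1 r1 c2 r2. is_bigon c1 r1 c2 r2 \<and> bigon_angle c1 r1 c2 r2 \<theta> \<and>
    side_total_curvature c1 r1 c2 r2 T1 \<and> side_total_curvature c2 r2 c1 r1 T2"
proof -
  obtain r1 r2 where r: "0 < r1" "r1 < pi/2" "0 < r2" "r2 < pi/2"
    and T: "side_curv \<theta> r1 r2 = T1" "side_curv \<theta> r2 r1 = T2"
    using side_curv_eqs_solvable[OF assms] by blast
  have "\<bar>centres_cos \<theta> r1 r2\<bar> \<le> 1"
    using centres_cos_sq_le_one abs_square_le_1 by blast
  then obtain c1 c2 where "c1 \<in> S2" "c2 \<in> S2" "c1 \<bullet> c2 = centres_cos \<theta> r1 r2"
    by (rule exists_S2_pair_with_inner)
  then show ?thesis
    using bigon_with_data_iff[OF assms(1,2)] r T by blast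
qed

lemma bigons_with_data_congruent:
  assumes "0 < \<theta>" "\<theta> < pi"
    and "is_bigon a1 s1 a2 s2" "bigon_angle a1 s1 a2 s2 \<theta>"
      "side_total_curvature a1 s1 a2 s2 T1" "side_total_curvature a2 s2 a1 s1 T2"
    and "is_bigon b1 t1 b2 t2" "bigon_angle b1 t1 b2 t2 \<theta>"
      "side_total_curvature b1 t1 b2 t2 T1" "side_total_curvature b2 t2 b1 t1 T2"
  shows "\<exists>f. orthogonal_transformation f \<and> f ` sdisk a1 s1 = sdisk b1 t1 \<and> f ` sdisk a2 s2 = sdisk b2 t2"
proof -
  have a: "a1 \<in> S2" "a2 \<in> S2" "0 < s1" "s1 < pi/2" "0 < s2" "s2 < pi/2"
      "a1 \<bullet> a2 = centres_cos \<theta> s1 s2" "side_curv \<theta> s1 s2 = T1" "side_curv \<theta> s2 s1 = T2"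
    and b: "b1 \<in> S2" "b2 \<in> S2" "0 < t1" "t1 < pi/2" "0 < t2" "t2 < pi/2"
      "b1 \<bullet> b2 = centres_cos \<theta> t1 t2" "side_curv \<theta> t1 t2 = T1" "side_curv \<theta> t2 t1 = T2"
    using assms bigon_with_data_iff[OF assms(1,2)] by blast+
  have radii: "s1 = t1 \<and> s2 = t2"
    using side_curv_eqs_unique[OF assms(1,2) a(3-6) b(3-6)] a(8,9) b(8,9) by simp
  then obtain f where f: "orthogonal_transformation f" "f a1 = b1" "f a2 = b2"
    using orthogonal_transformation_exists_pair[of a1 b1 a2 b2] a(1,2,7) b(1,2,7)
    by (auto simp: S2_def)
  then show ?thesis
    using radii by (intro exI[of _ f]) (simp add: sdisk_image)
qed

theorem lemma3p5:
  fixes \<theta> T1 T2 :: real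
  assumes "0 < \<theta>" and "\<theta> < pi" and "0 < T1" and "0 < T2" and "T1 + T2 < 2 * \<theta>"
  shows "(\<exists>c1 r1 c2 r2. is_bigon c1 r1 c2 r2 \<and> bigon_angle c1 r1 c2 r2 \<theta> \<and>
            side_total_curvature c1 r1 c2 r2 T1 \<and> side_total_curvature c2 r2 c1 r1 T2)
       \<and> (\<forall>a1 s1 a2 s2 b1 t1 b2 t2.
            is_bigon a1 s1 a2 s2 \<and> bigon_angle a1 s1 a2 s2 \<theta> \<and>
            side_total_curvature a1 s1 a2 s2 T1 \<and> side_total_curvature a2 s2 a1 s1 T2 \<and>
            is_bigon b1 t1 b2 t2 \<and> bigon_angle b1 t1 b2 t2 \<theta> \<and>
            side_total_curvature b1 t1 b2 t2 T1 \<and> side_total_curvature b2 t2 b1 t1 T2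
            \<longrightarrow> (\<exists>f. orthogonal_transformation f \<and>
                   f ` sdisk a1 s1 = sdisk b1 t1 \<and> f ` sdisk a2 s2 = sdisk b2 t2))"
  using exists_bigon_with_data[OF assms] bigons_with_data_congruent[OF assms(1,2)] by blast

end
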